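(* Let $r:\mathcal C_1\to\mathcal C_2$ be an $F$-linear exact functor between $F$-linear triangulated categories equipped with weight structures. Assume that (1) $r$ is weight exact and (2) $r_{w=0}:\mathcal C_{1,w=0}\to\mathcal C_{2,w=0}$ is full. Then $r$ maps minimal weight filtrations to minimal weight filtrations: if $M_{\le n-1}\to M\to M_{\ge n}\xrightarrow{\delta}M_{\le n-1}[1]$ is a minimal weight filtration concentrated at $n$ of $M\in\mathcal C_1$, then $r(M_{\le n-1})\to r(M)\to r(M_{\ge n})\xrightarrow{r(\delta)} r(M_{\le n-1})[1]$ is a minimal weight filtration concentrated at $n$ of $r(M)$.
   Context: $F$ denotes a finite direct product of fields of characteristic zero. A weight structure $w$ on a triangulated category $\mathcal C$ is a pair of full subcategories $(\mathcal C_{w\le0},\mathcal C_{w\ge0})$, closed under direct summands, with $\mathcal C_{w\le0}\subset\mathcal C_{w\le0}[1]$, $\mathcal C_{w\ge0}[1]\subset\mathcal C_{w\ge0}$, $\mathcal C_{w\le n}=\mathcal C_{w\le0}[n]$, $\mathcal C_{w\ge n}=\mathcal C_{w\ge0}[n]$, $\operatorname{Hom}(\mathcal C_{w\le0},\mathcal C_{w\ge1})=0$, and every object $M$ fits, for each $n$, into an exact triangle $A\to M\to B\to A[1]$ with $A\in\mathcal C_{w\le n}$, $B\in\mathcal C_{w\ge n+1}$ (a weight filtration). Heart: $\mathcal C_{w=0}=\mathcal C_{w\le0}\cap\mathcal C_{w\ge0}$. A functor $r$ is weight exact if it maps $\mathcal C_{1,w\le0}$ into $\mathcal C_{2,w\le0}$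 and $\mathcal C_{1,w\ge0}$ into $\mathcal C_{2,w\ge0}$; $r_{w=0}$ is the induced functor on hearts. For an additive category $\mathcal A$, the radical is the ideal $\operatorname{rad}_{\mathcal A}(X,Y)=\{f:X\to Y \mid \mathrm{id}_X-gf \text{ is invertible for all } g:Y\to X\}$. A minimal weight filtration concentrated at $n$ of $M$ is an exact triangle $M_{\le n-1}\to M\to M_{\ge n}\xrightarrow{\delta}M_{\le n-1}[1]$ with $M_{\le n-1}\in\mathcal C_{w\le n-1}$, $M_{\ge n}\in\mathcal C_{w\ge n}$ and $\delta\in\operatorname{rad}_{\mathcal C}(M_{\ge n},M_{\le n-1}[1])$. *)

theory Defs
  imports Main
begin

text \<open>Internal description of a finite product of fields: a finite complete family of
nonzero pairwise orthogonal idempotents e such that each factor eF is a field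
(with unit e) of characteristic zero.\<close>

definition fin_prod_char0_fields :: "('f::comm_ring_1) itself \<Rightarrow> bool" where
  "fin_prod_char0_fields _ \<longleftrightarrow>
     (\<exists>E::'f set. finite E \<and> sum id E = 1 \<and>
        (\<forall>e\<in>E. e * e = e \<and> e \<noteq> 0) \<and>
        (\<forall>e\<in>E. \<forall>e'\<in>E. e \<noteq> e' \<longrightarrow> e * e' = 0) \<and>
        (\<forall>e\<in>E. \<forall>x. e * x \<noteq> 0 \<longrightarrow> (\<exists>y. (e * x) * y = e)) \<and>
        (\<forall>e\<in>E. \<forall>n::nat. n > 0 \<longrightarrow> of_nat n * e \<noteq> 0))"

text \<open>Morphisms live in a single type; Hom-sets of distinct pairs of objects are disjoint.
cmp g f is the composite g after f.\<close>

record ('o,'m,'f) lcat =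
  Ob   :: "'o set"
  Hom  :: "'o \<Rightarrow> 'o \<Rightarrow> 'm set"
  cmp  :: "'m \<Rightarrow> 'm \<Rightarrow> 'm"
  idt  :: "'o \<Rightarrow> 'm"
  zro  :: "'o \<Rightarrow> 'o \<Rightarrow> 'm"
  pls  :: "'m \<Rightarrow> 'm \<Rightarrow> 'm"
  smul :: "'f \<Rightarrow> 'm \<Rightarrow> 'm"

definition mdiff :: "('o,'m,'f::comm_ring_1,'x) lcat_scheme \<Rightarrow> 'm \<Rightarrow> 'm \<Rightarrow> 'm" where
  "mdiff C f g = pls C f (smul C (-1) g)"

definition biprod :: "('o,'m,'f,'x) lcat_scheme \<Rightarrow> 'o \<Rightarrow> 'o \<Rightarrow> 'o \<Rightarrow> 'm \<Rightarrow> 'm \<Rightarrow> 'm \<Rightarrow> 'm \<Rightarrow> bool" where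
  "biprod C X X' Y i p i' p' \<longleftrightarrow>
     i \<in> Hom C X Y \<and> p \<in> Hom C Y X \<and> i' \<in> Hom C X' Y \<and> p' \<in> Hom C Y X' \<and>
     cmp C p i = idt C X \<and> cmp C p' i' = idt C X' \<and>
     cmp C p i' = zro C X' X \<and> cmp C p' i = zro C X X' \<and>
     pls C (cmp C i p) (cmp C i' p') = idt C Y"

definition is_direct_summand :: "('o,'m,'f,'x) lcat_scheme \<Rightarrow> 'o \<Rightarrow> 'o \<Rightarrow> bool" where
  "is_direct_summand C X Y \<longleftrightarrow>
     X \<in> Ob C \<and> Y \<in> Ob C \<and> (\<exists>X'\<in>Ob C. \<exists>i p i' p'. biprod C X X' Y i p i' p')"

definition F_linear_cat :: "('o,'m,'f::comm_ring_1,'x) lcat_scheme \<Rightarrow> bool" where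
  "F_linear_cat C \<longleftrightarrow>
     (\<forall>X Y. (X \<notin> Ob C \<or> Y \<notin> Ob C) \<longrightarrow> Hom C X Y = {}) \<and>
     (\<forall>X Y X' Y'. Hom C X Y \<inter> Hom C X' Y' \<noteq> {} \<longrightarrow> X = X' \<and> Y = Y') \<and>
     (\<forall>X\<in>Ob C. idt C X \<in> Hom C X X) \<and>
     (\<forall>X Y Z f g. f \<in> Hom C X Y \<longrightarrow> g \<in> Hom C Y Z \<longrightarrow> cmp C g f \<in> Hom C X Z) \<and>
     (\<forall>W X Y Z f g h. f \<in> Hom C W X \<longrightarrow> g \<in> Hom C X Y \<longrightarrow> h \<in> Hom C Y Z \<longrightarrow>
        cmp C h (cmp C g f) = cmp C (cmp C h g) f) \<and>
     (\<forall>X Y f. f \<in> Hom C X Y \<longrightarrow> cmp C (idt C Y) f = f \<and> cmp C f (idt C X) = f) \<and>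
     (\<forall>X\<in>Ob C. \<forall>Y\<in>Ob C. zro C X Y \<in> Hom C X Y) \<and>
     (\<forall>X Y f g. f \<in> Hom C X Y \<longrightarrow> g \<in> Hom C X Y \<longrightarrow> pls C f g \<in> Hom C X Y) \<and>
     (\<forall>X Y a f. f \<in> Hom C X Y \<longrightarrow> smul C a f \<in> Hom C X Y) \<and>
     (\<forall>X Y f g h. f \<in> Hom C X Y \<longrightarrow> g \<in> Hom C X Y \<longrightarrow> h \<in> Hom C X Y \<longrightarrow>
        pls C (pls C f g) h = pls C f (pls C g h)) \<and>
     (\<forall>X Y f g. f \<in> Hom C X Y \<longrightarrow> g \<in> Hom C X Y \<longrightarrow> pls C f g = pls C g f) \<and>
     (\<forall>X Y f. f \<in> Hom C X Y \<longrightarrow> pls C f (zro C X Y) = f) \<and>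
     (\<forall>X Y f. f \<in> Hom C X Y \<longrightarrow> pls C f (smul C (-1) f) = zro C X Y) \<and>
     (\<forall>X Y a f g. f \<in> Hom C X Y \<longrightarrow> g \<in> Hom C X Y \<longrightarrow>
        smul C a (pls C f g) = pls C (smul C a f) (smul C a g)) \<and>
     (\<forall>X Y a b f. f \<in> Hom C X Y \<longrightarrow> smul C (a + b) f = pls C (smul C a f) (smul C b f)) \<and>
     (\<forall>X Y a b f. f \<in> Hom C X Y \<longrightarrow> smul C (a * b) f = smul C a (smul C b f)) \<and>
     (\<forall>X Y f. f \<in> Hom C X Y \<longrightarrow> smul C 1 f = f) \<and>
     (\<forall>X Y Z f f' g. f \<in> Hom C X Y \<longrightarrow> f' \<in> Hom C X Y \<longrightarrow> g \<in> Hom C Y Z \<longrightarrow>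
        cmp C g (pls C f f') = pls C (cmp C g f) (cmp C g f')) \<and>
     (\<forall>X Y Z f g g'. f \<in> Hom C X Y \<longrightarrow> g \<in> Hom C Y Z \<longrightarrow> g' \<in> Hom C Y Z \<longrightarrow>
        cmp C (pls C g g') f = pls C (cmp C g f) (cmp C g' f)) \<and>
     (\<forall>X Y Z a f g. f \<in> Hom C X Y \<longrightarrow> g \<in> Hom C Y Z \<longrightarrow>
        cmp C (smul C a g) f = smul C a (cmp C g f) \<and> cmp C g (smul C a f) = smul C a (cmp C g f)) \<and>
     (\<exists>Z0\<in>Ob C. \<forall>X\<in>Ob C. Hom C Z0 X = {zro C Z0 X} \<and> Hom C X Z0 = {zro C X Z0}) \<and>
     (\<forall>X\<in>Ob C. \<forall>X'\<in>Ob C. \<exists>Y\<in>Ob C. \<exists>i p i' p'. biprod C X X' Y i p i' p')"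

definition iso :: "('o,'m,'f,'x) lcat_scheme \<Rightarrow> 'o \<Rightarrow> 'o \<Rightarrow> 'm \<Rightarrow> bool" where
  "iso C X Y f \<longleftrightarrow> f \<in> Hom C X Y \<and>
     (\<exists>g\<in>Hom C Y X. cmp C g f = idt C X \<and> cmp C f g = idt C Y)"

definition isomorphic :: "('o,'m,'f,'x) lcat_scheme \<Rightarrow> 'o \<Rightarrow> 'o \<Rightarrow> bool" where
  "isomorphic C X Y \<longleftrightarrow> (\<exists>f. iso C X Y f)"

definition rad :: "('o,'m,'f::comm_ring_1,'x) lcat_scheme \<Rightarrow> 'o \<Rightarrow> 'o \<Rightarrow> 'm \<Rightarrow> bool" where
  "rad C X Y f \<longleftrightarrow> f \<in> Hom C X Y \<and>
     (\<forall>g\<in>Hom C Y X. iso C X X (mdiff C (idt C X) (cmp C g f)))"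

definition F_linear_functor ::
  "('o1,'m1,'f::comm_ring_1,'x) lcat_scheme \<Rightarrow> ('o2,'m2,'f,'y) lcat_scheme \<Rightarrow>
   ('o1 \<Rightarrow> 'o2) \<Rightarrow> ('m1 \<Rightarrow> 'm2) \<Rightarrow> bool" where
  "F_linear_functor C D FO FM \<longleftrightarrow>
     (\<forall>X\<in>Ob C. FO X \<in> Ob D) \<and>
     (\<forall>X Y f. f \<in> Hom C X Y \<longrightarrow> FM f \<in> Hom D (FO X) (FO Y)) \<and>
     (\<forall>X\<in>Ob C. FM (idt C X) = idt D (FO X)) \<and>
     (\<forall>X Y Z f g. f \<in> Hom C X Y \<longrightarrow> g \<in> Hom C Y Z \<longrightarrow> FM (cmp C g f) = cmp D (FM g) (FM f)) \<and>
     (\<forall>X Y f g. f \<in> Hom C X Y \<longrightarrow> g \<in> Hom C X Y \<longrightarrow> FM (pls C f g) = pls D (FM f) (FM g)) \<and>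
     (\<forall>X Y a f. f \<in> Hom C X Y \<longrightarrow> FM (smul C a f) = smul D a (FM f))"

record ('o,'m,'f) tcat = "('o,'m,'f) lcat" +
  shO :: "'o \<Rightarrow> 'o"
  shM :: "'m \<Rightarrow> 'm"
  tri :: "('o \<times> 'o \<times> 'o \<times> 'm \<times> 'm \<times> 'm) set"

definition triangle :: "('o,'m,'f,'x) tcat_scheme \<Rightarrow> 'o \<Rightarrow> 'o \<Rightarrow> 'o \<Rightarrow> 'm \<Rightarrow> 'm \<Rightarrow> 'm \<Rightarrow> bool" where
  "triangle C X Y Z f g h \<longleftrightarrow> X \<in> Ob C \<and> Y \<in> Ob C \<and> Z \<in> Ob C \<and>
     f \<in> Hom C X Y \<and> g \<in> Hom C Y Z \<and> h \<in> Hom C Z (shO C X)"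

definition triangulated :: "('o,'m,'f::comm_ring_1,'x) tcat_scheme \<Rightarrow> bool" where
  "triangulated C \<longleftrightarrow>
     F_linear_cat C \<and>
     \<comment> \<open>the shift is an F-linear autoequivalence\<close>
     F_linear_functor C C (shO C) (shM C) \<and>
     (\<forall>X\<in>Ob C. \<forall>Y\<in>Ob C. bij_betw (shM C) (Hom C X Y) (Hom C (shO C X) (shO C Y))) \<and>
     (\<forall>Y\<in>Ob C. \<exists>X\<in>Ob C. isomorphic C (shO C X) Y) \<and>
     \<comment> \<open>distinguished triangles are triangles\<close>
     (\<forall>(X,Y,Z,f,g,h)\<in>tri C. triangle C X Y Z f g h) \<and>
     \<comment> \<open>TR1\<close>
     (\<forall>X Y Z f g h X' Y' Z' f' g' h' a b c. (X,Y,Z,f,g,h) \<in> tri C \<longrightarrow>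
        triangle C X' Y' Z' f' g' h' \<longrightarrow> iso C X X' a \<longrightarrow> iso C Y Y' b \<longrightarrow> iso C Z Z' c \<longrightarrow>
        cmp C f' a = cmp C b f \<longrightarrow> cmp C g' b = cmp C c g \<longrightarrow>
        cmp C h' c = cmp C (shM C a) h \<longrightarrow> (X',Y',Z',f',g',h') \<in> tri C) \<and>
     (\<forall>X\<in>Ob C. \<exists>Z0\<in>Ob C. (\<forall>W\<in>Ob C. Hom C Z0 W = {zro C Z0 W} \<and> Hom C W Z0 = {zro C W Z0}) \<and>
        (X, X, Z0, idt C X, zro C X Z0, zro C Z0 (shO C X)) \<in> tri C) \<and>
     (\<forall>X Y f. f \<in> Hom C X Y \<longrightarrow> (\<exists>Z g h. (X,Y,Z,f,g,h) \<in> tri C)) \<and>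
     \<comment> \<open>TR2 (rotation)\<close>
     (\<forall>X Y Z f g h. triangle C X Y Z f g h \<longrightarrow>
        ((X,Y,Z,f,g,h) \<in> tri C \<longleftrightarrow> (Y, Z, shO C X, g, h, smul C (-1) (shM C f)) \<in> tri C)) \<and>
     \<comment> \<open>TR3\<close>
     (\<forall>X Y Z f g h X' Y' Z' f' g' h' a b. (X,Y,Z,f,g,h) \<in> tri C \<longrightarrow>
        (X',Y',Z',f',g',h') \<in> tri C \<longrightarrow> a \<in> Hom C X X' \<longrightarrow> b \<in> Hom C Y Y' \<longrightarrow>
        cmp C b f = cmp C f' a \<longrightarrow>
        (\<exists>c\<in>Hom C Z Z'. cmp C c g = cmp C g' b \<and> cmp C (shM C a) h = cmp C h' c)) \<and>
     \<comment> \<open>TR4 (octahedral axiom)\<close>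
     (\<forall>X Y Z f g Z' u u' X' v v' Y' w w'. f \<in> Hom C X Y \<longrightarrow> g \<in> Hom C Y Z \<longrightarrow>
        (X,Y,Z',f,u,u') \<in> tri C \<longrightarrow> (Y,Z,X',g,v,v') \<in> tri C \<longrightarrow>
        (X,Z,Y',cmp C g f,w,w') \<in> tri C \<longrightarrow>
        (\<exists>a\<in>Hom C Z' Y'. \<exists>b\<in>Hom C Y' X'.
           cmp C a u = cmp C w g \<and> cmp C w' a = u' \<and>
           cmp C b w = v \<and> cmp C v' b = cmp C (shM C f) w' \<and>
           (Z', Y', X', a, b, cmp C (shM C u) v') \<in> tri C))"

text \<open>Exact functor: an F-linear functor r together with a natural isomorphism
phi_X : r(X[1]) -> r(X)[1] such that distinguished triangles
(X,Y,Z,f,g,h) are sent to distinguished triangles (rX,rY,rZ,rf,rg,phi_X o rh).\<close>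

definition exact_functor ::
  "('o1,'m1,'f::comm_ring_1,'x) tcat_scheme \<Rightarrow> ('o2,'m2,'f,'y) tcat_scheme \<Rightarrow>
   ('o1 \<Rightarrow> 'o2) \<Rightarrow> ('m1 \<Rightarrow> 'm2) \<Rightarrow> ('o1 \<Rightarrow> 'm2) \<Rightarrow> bool" where
  "exact_functor C D FO FM phi \<longleftrightarrow>
     F_linear_functor C D FO FM \<and>
     (\<forall>X\<in>Ob C. iso D (FO (shO C X)) (shO D (FO X)) (phi X)) \<and>
     (\<forall>X Y f. f \<in> Hom C X Y \<longrightarrow>
        cmp D (phi Y) (FM (shM C f)) = cmp D (shM D (FM f)) (phi X)) \<and>
     (\<forall>X Y Z f g h. (X,Y,Z,f,g,h) \<in> tri C \<longrightarrow>
        (FO X, FO Y, FO Z, FM f, FM g, cmp D (phi X) (FM h)) \<in> tri D)"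

text \<open>For a class S of objects, shifted_class C S n is S[n] (closed under isomorphism),
for an integer n; negative shifts are handled via the autoequivalence property.\<close>
definition shifted_class :: "('o,'m,'f,'x) tcat_scheme \<Rightarrow> 'o set \<Rightarrow> int \<Rightarrow> 'o set" where
  "shifted_class C S n = {X \<in> Ob C. \<exists>Y\<in>S. \<exists>j k::nat. n = int k - int j \<and>
        isomorphic C ((shO C ^^ j) X) ((shO C ^^ k) Y)}"

text \<open>A weight structure is a pair (C_{w<=0}, C_{w>=0}).\<close>
definition wle :: "('o,'m,'f,'x) tcat_scheme \<Rightarrow> 'o set \<times> 'o set \<Rightarrow> int \<Rightarrow> 'o set" where
  "wle C w n = shifted_class C (fst w) n"

definition wge :: "('o,'m,'f,'x) tcat_scheme \<Rightarrow> 'o set \<times> 'o set \<Rightarrow> int \<Rightarrow> 'o set" where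
  "wge C w n = shifted_class C (snd w) n"

definition heart :: "'o set \<times> 'o set \<Rightarrow> 'o set" where
  "heart w = fst w \<inter> snd w"

definition weight_structure :: "('o,'m,'f,'x) tcat_scheme \<Rightarrow> 'o set \<times> 'o set \<Rightarrow> bool" where
  "weight_structure C w \<longleftrightarrow>
     fst w \<subseteq> Ob C \<and> snd w \<subseteq> Ob C \<and>
     (\<forall>X Y. is_direct_summand C X Y \<longrightarrow> Y \<in> fst w \<longrightarrow> X \<in> fst w) \<and>
     (\<forall>X Y. is_direct_summand C X Y \<longrightarrow> Y \<in> snd w \<longrightarrow> X \<in> snd w) \<and>
     fst w \<subseteq> wle C w 1 \<and>
     wge C w 1 \<subseteq> snd w \<and>
     (\<forall>X\<in>fst w. \<forall>Y\<in>wge C w 1. Hom C X Y = {zro C X Y}) \<and>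
     (\<forall>M\<in>Ob C. \<forall>n::int. \<exists>A B a b c. (A, M, B, a, b, c) \<in> tri C \<and>
        A \<in> wle C w n \<and> B \<in> wge C w (n + 1))"

definition weight_exact ::
  "('o1,'m1,'f,'x) tcat_scheme \<Rightarrow> 'o1 set \<times> 'o1 set \<Rightarrow> ('o2,'m2,'f,'y) tcat_scheme \<Rightarrow>
   'o2 set \<times> 'o2 set \<Rightarrow> ('o1 \<Rightarrow> 'o2) \<Rightarrow> bool" where
  "weight_exact C w D v FO \<longleftrightarrow>
     (\<forall>X\<in>fst w. FO X \<in> fst v) \<and> (\<forall>X\<in>snd w. FO X \<in> snd v)"

definition full_on_hearts ::
  "('o1,'m1,'f,'x) tcat_scheme \<Rightarrow> 'o1 set \<times> 'o1 set \<Rightarrow> ('o2,'m2,'f,'y) tcat_scheme \<Rightarrow>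
   ('o1 \<Rightarrow> 'o2) \<Rightarrow> ('m1 \<Rightarrow> 'm2) \<Rightarrow> bool" where
  "full_on_hearts C w D FO FM \<longleftrightarrow>
     (\<forall>X\<in>heart w. \<forall>Y\<in>heart w. Hom D (FO X) (FO Y) \<subseteq> FM ` Hom C X Y)"

definition minimal_weight_filtration ::
  "('o,'m,'f::comm_ring_1,'x) tcat_scheme \<Rightarrow> 'o set \<times> 'o set \<Rightarrow> int \<Rightarrow>
   'o \<Rightarrow> 'o \<Rightarrow> 'o \<Rightarrow> 'm \<Rightarrow> 'm \<Rightarrow> 'm \<Rightarrow> bool" where
  "minimal_weight_filtration C w n A M B a b delta \<longleftrightarrow>
     (A, M, B, a, b, delta) \<in> tri C \<and> A \<in> wle C w (n - 1) \<and> B \<in> wge C w n \<and>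
     rad C B (shO C A) delta"

end

theory Submission
  imports Defs
begin

(* A morphism delta : B -> A[1] lies in the radical iff 1 - g delta is invertible for every
   g : A[1] -> B.  Functors preserve invertibility and r(delta) differs from the connecting
   morphism of the image triangle only by the isomorphism phi, so it suffices that r is
   surjective on morphisms r(A[1]) -> r(B).  Here A[1] has weights <= n and B has weights >= n;
   orthogonality of weights factors every such morphism through weight truncations of A[1] and B
   of pure weight n.  Objects of pure weight n are, up to isomorphism and shifts, objects of the
   heart, where r is full by assumption, and fullness transports along isomorphisms and shifts
   because r commutes with the shift up to phi. *)

locale lin_cat =
  fixes C :: "('o,'m,'f::comm_ring_1,'x) lcat_scheme"
  assumes L: "F_linear_cat C"
begin

lemma hom_objs: "f \<in> Hom C X Y \<Longrightarrow> X \<in> Ob C \<and> Y \<in> Ob C"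
  using L unfolding F_linear_cat_def by (metis empty_iff)
lemma hom_unique: "f \<in> Hom C X Y \<Longrightarrow> f \<in> Hom C X' Y' \<Longrightarrow> X = X' \<and> Y = Y'"
  using L unfolding F_linear_cat_def by (metis IntI empty_iff)
lemma idt_Hom: "X \<in> Ob C \<Longrightarrow> idt C X \<in> Hom C X X"
  using L by (simp add: F_linear_cat_def)
lemma cmp_Hom: "f \<in> Hom C X Y \<Longrightarrow> g \<in> Hom C Y Z \<Longrightarrow> cmp C g f \<in> Hom C X Z"
  using L by (simp add: F_linear_cat_def)
lemma cmp_assoc_Hom: "f \<in> Hom C W X \<Longrightarrow> g \<in> Hom C X Y \<Longrightarrow> h \<in> Hom C Y Z \<Longrightarrow>
   cmp C h (cmp C g f) = cmp C (cmp C h g) f"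
  using L by (simp add: F_linear_cat_def)
lemma cmp_idt_left_Hom: "f \<in> Hom C X Y \<Longrightarrow> cmp C (idt C Y) f = f"
  using L by (simp add: F_linear_cat_def)
lemma cmp_idt_right_Hom: "f \<in> Hom C X Y \<Longrightarrow> cmp C f (idt C X) = f"
  using L by (simp add: F_linear_cat_def)
lemma zro_Hom: "X \<in> Ob C \<Longrightarrow> Y \<in> Ob C \<Longrightarrow> zro C X Y \<in> Hom C X Y"
  using L by (simp add: F_linear_cat_def)
lemma pls_Hom: "f \<in> Hom C X Y \<Longrightarrow> g \<in> Hom C X Y \<Longrightarrow> pls C f g \<in> Hom C X Y"
  using L by (simp add: F_linear_cat_def)
lemma smul_Hom: "f \<in> Hom C X Y \<Longrightarrow> smul C a f \<in> Hom C X Y"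
  using L by (simp add: F_linear_cat_def)
lemma pls_assoc_Hom: "f \<in> Hom C X Y \<Longrightarrow> g \<in> Hom C X Y \<Longrightarrow> h \<in> Hom C X Y \<Longrightarrow>
        pls C (pls C f g) h = pls C f (pls C g h)"
  using L by (simp add: F_linear_cat_def)
lemma pls_commute_Hom: "f \<in> Hom C X Y \<Longrightarrow> g \<in> Hom C X Y \<Longrightarrow> pls C f g = pls C g f"
  using L by (simp add: F_linear_cat_def)
lemma pls_zro_Hom: "f \<in> Hom C X Y \<Longrightarrow> pls C f (zro C X Y) = f"
  using L by (simp add: F_linear_cat_def)
lemma pls_neg_Hom: "f \<in> Hom C X Y \<Longrightarrow> pls C f (smul C (-1) f) = zro C X Y"
  using L by (simp add: F_linear_cat_def)
lemma smul_pls_Hom: "f \<in> Hom C X Y \<Longrightarrow> g \<in> Hom C X Y \<Longrightarrow>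
        smul C a (pls C f g) = pls C (smul C a f) (smul C a g)"
  using L by (simp add: F_linear_cat_def)
lemma smul_mult_Hom: "f \<in> Hom C X Y \<Longrightarrow> smul C (a * b) f = smul C a (smul C b f)"
  using L by (simp add: F_linear_cat_def)
lemma smul_one_Hom: "f \<in> Hom C X Y \<Longrightarrow> smul C 1 f = f"
  using L by (simp add: F_linear_cat_def)
lemma cmp_pls_right_Hom: "f \<in> Hom C X Y \<Longrightarrow> f' \<in> Hom C X Y \<Longrightarrow> g \<in> Hom C Y Z \<Longrightarrow>
        cmp C g (pls C f f') = pls C (cmp C g f) (cmp C g f')"
  using L by (simp add: F_linear_cat_def)
lemma cmp_pls_left_Hom: "f \<in> Hom C X Y \<Longrightarrow> g \<in> Hom C Y Z \<Longrightarrow> g' \<in> Hom C Y Z \<Longrightarrow>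
        cmp C (pls C g g') f = pls C (cmp C g f) (cmp C g' f)"
  using L by (simp add: F_linear_cat_def)
lemma cmp_smul_left_Hom: "f \<in> Hom C X Y \<Longrightarrow> g \<in> Hom C Y Z \<Longrightarrow>
        cmp C (smul C a g) f = smul C a (cmp C g f)"
  using L by (simp add: F_linear_cat_def)
lemma cmp_smul_right_Hom: "f \<in> Hom C X Y \<Longrightarrow> g \<in> Hom C Y Z \<Longrightarrow>
        cmp C g (smul C a f) = smul C a (cmp C g f)"
  using L by (simp add: F_linear_cat_def)
lemma zero_object_ex: "\<exists>Z0\<in>Ob C. \<forall>X\<in>Ob C. Hom C Z0 X = {zro C Z0 X} \<and> Hom C X Z0 = {zro C X Z0}"
  using L unfolding F_linear_cat_def by (elim conjE) assumption

lemma cmp_zro_right_Hom: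
  assumes g: "g \<in> Hom C Y Z" and X: "X \<in> Ob C"
  shows "cmp C g (zro C X Y) = zro C X Z"
proof -
  let ?z = "zro C X Y"
  have z: "?z \<in> Hom C X Y" using zro_Hom X hom_objs[OF g] by blast
  have "cmp C g ?z = cmp C g (pls C ?z (smul C (-1) ?z))" by (simp only: pls_neg_Hom[OF z])
  also have "\<dots> = pls C (cmp C g ?z) (smul C (-1) (cmp C g ?z))"
    by (simp only: cmp_pls_right_Hom[OF z smul_Hom[OF z] g] cmp_smul_right_Hom[OF z g])
  also have "\<dots> = zro C X Z" by (rule pls_neg_Hom) (rule cmp_Hom[OF z g])
  finally show ?thesis .
qed

lemma cmp_zro_left_Hom:
  assumes f: "f \<in> Hom C X Y" and Z: "Z \<in> Ob C"
  shows "cmp C (zro C Y Z) f = zro C X Z"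
proof -
  let ?z = "zro C Y Z"
  have z: "?z \<in> Hom C Y Z" using zro_Hom Z hom_objs[OF f] by blast
  have "cmp C ?z f = cmp C (pls C ?z (smul C (-1) ?z)) f" by (simp only: pls_neg_Hom[OF z])
  also have "\<dots> = pls C (cmp C ?z f) (smul C (-1) (cmp C ?z f))"
    by (simp only: cmp_pls_left_Hom[OF f z smul_Hom[OF z]] cmp_smul_left_Hom[OF f z])
  also have "\<dots> = zro C X Z" by (rule pls_neg_Hom) (rule cmp_Hom[OF f z])
  finally show ?thesis .
qed

lemma pls_zro_left_Hom: "f \<in> Hom C X Y \<Longrightarrow> pls C (zro C X Y) f = f"
  by (metis hom_objs pls_commute_Hom pls_zro_Hom zro_Hom)

lemma smul_neg_neg_Hom: "f \<in> Hom C X Y \<Longrightarrow> smul C (-1) (smul C (-1) f) = f"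
  using smul_mult_Hom[of f X Y "-1" "-1"] smul_one_Hom by simp

lemma pls_idem_eq_zro:
  assumes x: "x \<in> Hom C X Y" and idem: "pls C x x = x"
  shows "x = zro C X Y"
proof -
  have "zro C X Y = pls C (pls C x x) (smul C (-1) x)" using pls_neg_Hom[OF x] idem by simp
  also have "\<dots> = pls C x (pls C x (smul C (-1) x))" by (rule pls_assoc_Hom[OF x x smul_Hom[OF x]])
  also have "\<dots> = x" using pls_neg_Hom[OF x] pls_zro_Hom[OF x] by simp
  finally show ?thesis by (rule sym)
qed

lemma smul_zro_Hom:
  assumes "X \<in> Ob C" "Y \<in> Ob C"
  shows "smul C a (zro C X Y) = zro C X Y"
proof -
  have z: "zro C X Y \<in> Hom C X Y" using assms by (rule zro_Hom)
  have "pls C (smul C a (zro C X Y)) (smul C a (zro C X Y)) = smul C a (zro C X Y)"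
    using smul_pls_Hom[OF z z, of a, symmetric] pls_zro_Hom[OF z] by simp
  then show ?thesis using z pls_idem_eq_zro smul_Hom by blast
qed

lemma mdiff_Hom: "f \<in> Hom C X Y \<Longrightarrow> g \<in> Hom C X Y \<Longrightarrow> mdiff C f g \<in> Hom C X Y"
  unfolding mdiff_def by (intro pls_Hom smul_Hom)

lemma mdiff_self_Hom: "f \<in> Hom C X Y \<Longrightarrow> mdiff C f f = zro C X Y"
  unfolding mdiff_def by (rule pls_neg_Hom)

lemma mdiff_zro_Hom: "f \<in> Hom C X Y \<Longrightarrow> mdiff C f (zro C X Y) = f"
  unfolding mdiff_def by (metis hom_objs pls_zro_Hom smul_zro_Hom)

lemma mdiff_eq_zro_Hom:
  assumes f: "f \<in> Hom C X Y" and g: "g \<in> Hom C X Y" and eq: "mdiff C f g = zro C X Y"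
  shows "f = g"
proof -
  have g': "smul C (-1) g \<in> Hom C X Y" using g by (rule smul_Hom)
  have "pls C (smul C (-1) g) g = zro C X Y"
    using pls_neg_Hom[OF g'] smul_neg_neg_Hom[OF g] by simp
  then have "f = pls C f (pls C (smul C (-1) g) g)" using pls_zro_Hom[OF f] by simp
  also have "\<dots> = pls C (mdiff C f g) g" unfolding mdiff_def using pls_assoc_Hom[OF f g' g] by simp
  also have "\<dots> = g" using eq pls_zro_left_Hom[OF g] by simp
  finally show ?thesis .
qed

lemma cmp_mdiff_right_Hom: "f \<in> Hom C X Y \<Longrightarrow> f' \<in> Hom C X Y \<Longrightarrow> g \<in> Hom C Y Z \<Longrightarrow>
    cmp C g (mdiff C f f') = mdiff C (cmp C g f) (cmp C g f')"
  unfolding mdiff_def by (simp add: cmp_pls_right_Hom cmp_smul_right_Hom smul_Hom)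

lemma cmp_mdiff_left_Hom: "f \<in> Hom C X Y \<Longrightarrow> g \<in> Hom C Y Z \<Longrightarrow> g' \<in> Hom C Y Z \<Longrightarrow>
    cmp C (mdiff C g g') f = mdiff C (cmp C g f) (cmp C g' f)"
  unfolding mdiff_def by (simp add: cmp_pls_left_Hom cmp_smul_left_Hom smul_Hom)

(* Hom-sets of distinct pairs of objects are disjoint, so a morphism determines its source and
   target; phrasing facts via arr/src/tgt lets the simplifier do the typing bookkeeping. *)
definition arr where "arr f \<longleftrightarrow> (\<exists>X Y. f \<in> Hom C X Y)"
definition src where "src f = (THE X. \<exists>Y. f \<in> Hom C X Y)"
definition tgt where "tgt f = (THE Y. \<exists>X. f \<in> Hom C X Y)"

lemma hom_iff: "f \<in> Hom C X Y \<longleftrightarrow> arr f \<and> src f = X \<and> tgt f = Y"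
proof
  assume h: "f \<in> Hom C X Y"
  have "src f = X" unfolding src_def
    by (rule the_equality) (use h hom_unique in blast)+
  moreover have "tgt f = Y" unfolding tgt_def
    by (rule the_equality) (use h hom_unique in blast)+
  ultimately show "arr f \<and> src f = X \<and> tgt f = Y" using h arr_def by blast
next
  assume h: "arr f \<and> src f = X \<and> tgt f = Y"
  then obtain X' Y' where h': "f \<in> Hom C X' Y'" using arr_def by blast
  have "src f = X'" unfolding src_def
    by (rule the_equality) (use h' hom_unique in blast)+
  moreover have "tgt f = Y'" unfolding tgt_def
    by (rule the_equality) (use h' hom_unique in blast)+
  ultimately show "f \<in> Hom C X Y" using h h' by simp
qed

lemma arr_Hom: "arr f \<Longrightarrow> f \<in> Hom C (src f) (tgt f)" using hom_iff by blast

lemma arr_objs[simp]: "arr f \<Longrightarrow> src f \<in> Ob C" "arr f \<Longrightarrow> tgt f \<in> Ob C"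
  using arr_Hom hom_objs by blast+

lemma arr_idt[simp]: "X \<in> Ob C \<Longrightarrow> arr (idt C X)" "X \<in> Ob C \<Longrightarrow> src (idt C X) = X" "X \<in> Ob C \<Longrightarrow> tgt (idt C X) = X"
  using idt_Hom hom_iff by blast+
lemma arr_zro[simp]: "X \<in> Ob C \<Longrightarrow> Y \<in> Ob C \<Longrightarrow> arr (zro C X Y)"
   "X \<in> Ob C \<Longrightarrow> Y \<in> Ob C \<Longrightarrow> src (zro C X Y) = X" "X \<in> Ob C \<Longrightarrow> Y \<in> Ob C \<Longrightarrow> tgt (zro C X Y) = Y"
  using zro_Hom hom_iff by blast+
lemma arr_cmp[simp]:
  "arr f \<Longrightarrow> arr g \<Longrightarrow> tgt f = src g \<Longrightarrow> arr (cmp C g f)"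
  "arr f \<Longrightarrow> arr g \<Longrightarrow> tgt f = src g \<Longrightarrow> src (cmp C g f) = src f"
  "arr f \<Longrightarrow> arr g \<Longrightarrow> tgt f = src g \<Longrightarrow> tgt (cmp C g f) = tgt g"
  by (metis arr_Hom cmp_Hom hom_iff)+
lemma arr_pls[simp]:
  "arr f \<Longrightarrow> arr g \<Longrightarrow> src f = src g \<Longrightarrow> tgt f = tgt g \<Longrightarrow> arr (pls C f g)"
  "arr f \<Longrightarrow> arr g \<Longrightarrow> src f = src g \<Longrightarrow> tgt f = tgt g \<Longrightarrow> src (pls C f g) = src f"
  "arr f \<Longrightarrow> arr g \<Longrightarrow> src f = src g \<Longrightarrow> tgt f = tgt g \<Longrightarrow> tgt (pls C f g) = tgt f"
  by (metis arr_Hom pls_Hom hom_iff)+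
lemma arr_mdiff[simp]:
  "arr f \<Longrightarrow> arr g \<Longrightarrow> src f = src g \<Longrightarrow> tgt f = tgt g \<Longrightarrow> arr (mdiff C f g)"
  "arr f \<Longrightarrow> arr g \<Longrightarrow> src f = src g \<Longrightarrow> tgt f = tgt g \<Longrightarrow> src (mdiff C f g) = src f"
  "arr f \<Longrightarrow> arr g \<Longrightarrow> src f = src g \<Longrightarrow> tgt f = tgt g \<Longrightarrow> tgt (mdiff C f g) = tgt f"
  by (metis arr_Hom mdiff_Hom hom_iff)+
lemma arr_smul[simp]:
  "arr f \<Longrightarrow> arr (smul C a f)" "arr f \<Longrightarrow> src (smul C a f) = src f" "arr f \<Longrightarrow> tgt (smul C a f) = tgt f"
  by (metis arr_Hom smul_Hom hom_iff)+

lemma cmp_assoc[simp]: "arr f \<Longrightarrow> arr g \<Longrightarrow> arr h \<Longrightarrow> tgt f = src g \<Longrightarrow> tgt g = src h \<Longrightarrow>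
   cmp C (cmp C h g) f = cmp C h (cmp C g f)"
  by (metis arr_Hom cmp_assoc_Hom)
lemma cmp_idt_left[simp]: "arr f \<Longrightarrow> tgt f = Y \<Longrightarrow> cmp C (idt C Y) f = f"
  using arr_Hom cmp_idt_left_Hom by blast
lemma cmp_idt_right[simp]: "arr f \<Longrightarrow> src f = X \<Longrightarrow> cmp C f (idt C X) = f"
  using arr_Hom cmp_idt_right_Hom by blast
lemma cmp_zro_right[simp]: "arr g \<Longrightarrow> src g = Y \<Longrightarrow> X \<in> Ob C \<Longrightarrow> cmp C g (zro C X Y) = zro C X (tgt g)"
  using arr_Hom cmp_zro_right_Hom by blast
lemma cmp_zro_left[simp]: "arr f \<Longrightarrow> tgt f = Y \<Longrightarrow> Z \<in> Ob C \<Longrightarrow> cmp C (zro C Y Z) f = zro C (src f) Z"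
  using arr_Hom cmp_zro_left_Hom by blast
lemma cmp_smul_left[simp]: "arr f \<Longrightarrow> arr g \<Longrightarrow> tgt f = src g \<Longrightarrow> cmp C (smul C a g) f = smul C a (cmp C g f)"
  by (metis arr_Hom cmp_smul_left_Hom)
lemma cmp_smul_right[simp]: "arr f \<Longrightarrow> arr g \<Longrightarrow> tgt f = src g \<Longrightarrow> cmp C g (smul C a f) = smul C a (cmp C g f)"
  by (metis arr_Hom cmp_smul_right_Hom)
lemma smul_zro[simp]: "X \<in> Ob C \<Longrightarrow> Y \<in> Ob C \<Longrightarrow> smul C a (zro C X Y) = zro C X Y"
  by (rule smul_zro_Hom)
lemma smul_neg_neg[simp]: "arr f \<Longrightarrow> smul C (-1) (smul C (-1) f) = f"
  using arr_Hom smul_neg_neg_Hom by blast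
lemma pls_zro_right[simp]: "arr f \<Longrightarrow> src f = X \<Longrightarrow> tgt f = Y \<Longrightarrow> pls C f (zro C X Y) = f"
  using arr_Hom pls_zro_Hom by blast
lemma pls_zro_left[simp]: "arr f \<Longrightarrow> src f = X \<Longrightarrow> tgt f = Y \<Longrightarrow> pls C (zro C X Y) f = f"
  using arr_Hom pls_zro_left_Hom by blast
lemma mdiff_zro[simp]: "arr f \<Longrightarrow> src f = X \<Longrightarrow> tgt f = Y \<Longrightarrow> mdiff C f (zro C X Y) = f"
  using arr_Hom mdiff_zro_Hom by blast
lemma mdiff_self[simp]: "arr f \<Longrightarrow> mdiff C f f = zro C (src f) (tgt f)"
  using arr_Hom mdiff_self_Hom by blast
lemma pls_neg[simp]: "arr f \<Longrightarrow> pls C f (smul C (-1) f) = zro C (src f) (tgt f)"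
  using arr_Hom pls_neg_Hom by blast

lemma cmp_pls_right: "arr f \<Longrightarrow> arr f' \<Longrightarrow> arr g \<Longrightarrow> src f = src f' \<Longrightarrow> tgt f = tgt f' \<Longrightarrow> tgt f = src g \<Longrightarrow>
        cmp C g (pls C f f') = pls C (cmp C g f) (cmp C g f')"
  by (metis arr_Hom cmp_pls_right_Hom)
lemma cmp_pls_left: "arr f \<Longrightarrow> arr g \<Longrightarrow> arr g' \<Longrightarrow> src g = src g' \<Longrightarrow> tgt g = tgt g' \<Longrightarrow> tgt f = src g \<Longrightarrow>
        cmp C (pls C g g') f = pls C (cmp C g f) (cmp C g' f)"
  by (metis arr_Hom cmp_pls_left_Hom)
lemma cmp_mdiff_right: "arr f \<Longrightarrow> arr f' \<Longrightarrow> arr g \<Longrightarrow> src f = src f' \<Longrightarrow> tgt f = tgt f' \<Longrightarrow> tgt f = src g \<Longrightarrow>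
        cmp C g (mdiff C f f') = mdiff C (cmp C g f) (cmp C g f')"
  by (metis arr_Hom cmp_mdiff_right_Hom)
lemma cmp_mdiff_left: "arr f \<Longrightarrow> arr g \<Longrightarrow> arr g' \<Longrightarrow> src g = src g' \<Longrightarrow> tgt g = tgt g' \<Longrightarrow> tgt f = src g \<Longrightarrow>
        cmp C (mdiff C g g') f = mdiff C (cmp C g f) (cmp C g' f)"
  by (metis arr_Hom cmp_mdiff_left_Hom)
lemma mdiff_eq_zro: "arr f \<Longrightarrow> arr g \<Longrightarrow> src f = src g \<Longrightarrow> tgt f = tgt g \<Longrightarrow> mdiff C f g = zro C (src f) (tgt f) \<Longrightarrow> f = g"
  by (metis arr_Hom mdiff_eq_zro_Hom)

lemma cmp_inverse_cancel: "cmp C g f = idt C X \<Longrightarrow> arr f \<Longrightarrow> arr g \<Longrightarrow> tgt f = src g \<Longrightarrow> src f = X \<Longrightarrow> arr x \<Longrightarrow> tgt x = X \<Longrightarrow>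
   cmp C g (cmp C f x) = x"
proof -
  assume h: "cmp C g f = idt C X" "arr f" "arr g" "tgt f = src g" "src f = X" "arr x" "tgt x = X"
  have e: "cmp C (cmp C g f) x = cmp C g (cmp C f x)" by (rule cmp_assoc) (use h in auto)
  show ?thesis by (metis e h(1) cmp_idt_left[OF h(6) h(7)])
qed

lemma isoE: assumes "iso C X Y f"
  obtains g where "arr f" "src f = X" "tgt f = Y" "arr g" "src g = Y" "tgt g = X"
    "cmp C g f = idt C X" "cmp C f g = idt C Y"
proof -
  from assms obtain g where h: "f \<in> Hom C X Y" "g \<in> Hom C Y X" "cmp C g f = idt C X" "cmp C f g = idt C Y"
    unfolding iso_def by blast
  show ?thesis apply (rule that[of g]) using h by (auto simp: hom_iff)
qed

lemma isoI: "arr f \<Longrightarrow> src f = X \<Longrightarrow> tgt f = Y \<Longrightarrow> arr g \<Longrightarrow> src g = Y \<Longrightarrow> tgt g = X \<Longrightarrow>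
    cmp C g f = idt C X \<Longrightarrow> cmp C f g = idt C Y \<Longrightarrow> iso C X Y f"
  unfolding iso_def by (intro conjI bexI[of _ g]) (auto simp: hom_iff)

lemma iso_idt: "X \<in> Ob C \<Longrightarrow> iso C X X (idt C X)"
  by (rule isoI[where g="idt C X"]) auto

lemma iso_inverse: assumes "iso C X Y f"
  obtains g where "iso C Y X g" "cmp C g f = idt C X" "cmp C f g = idt C Y"
proof -
  obtain g where h: "arr f" "src f = X" "tgt f = Y" "arr g" "src g = Y" "tgt g = X"
    "cmp C g f = idt C X" "cmp C f g = idt C Y" using isoE[OF assms] by blast
  have "iso C Y X g" using h by (intro isoI[where g=f]) auto
  then show ?thesis using that h by blast
qed

lemma iso_cmp: assumes "iso C X Y f" "iso C Y Z g" shows "iso C X Z (cmp C g f)"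
proof -
  obtain f' where f: "arr f" "src f = X" "tgt f = Y" "arr f'" "src f' = Y" "tgt f' = X"
    "cmp C f' f = idt C X" "cmp C f f' = idt C Y" using isoE[OF assms(1)] by blast
  obtain g' where g: "arr g" "src g = Y" "tgt g = Z" "arr g'" "src g' = Z" "tgt g' = Y"
    "cmp C g' g = idt C Y" "cmp C g g' = idt C Z" using isoE[OF assms(2)] by blast
  show ?thesis
  proof (rule isoI[where g="cmp C f' g'"])
    have "cmp C (cmp C f' g') (cmp C g f) = cmp C f' (cmp C g' (cmp C g f))" using f g by simp
    also have "\<dots> = cmp C f' f" using f g by (simp add: cmp_inverse_cancel[OF g(7)])
    finally show "cmp C (cmp C f' g') (cmp C g f) = idt C X" using f by simp
    have "cmp C (cmp C g f) (cmp C f' g') = cmp C g (cmp C f (cmp C f' g'))" using f g by simp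
    also have "\<dots> = cmp C g g'" using f g by (simp add: cmp_inverse_cancel[OF f(8)])
    finally show "cmp C (cmp C g f) (cmp C f' g') = idt C Z" using g by simp
  qed (use f g in auto)
qed

lemma isomorphic_refl: "X \<in> Ob C \<Longrightarrow> isomorphic C X X"
  unfolding isomorphic_def using iso_idt by blast
lemma isomorphic_sym: "isomorphic C X Y \<Longrightarrow> isomorphic C Y X"
  unfolding isomorphic_def using iso_inverse by blast
lemma isomorphic_trans: "isomorphic C X Y \<Longrightarrow> isomorphic C Y Z \<Longrightarrow> isomorphic C X Z"
  unfolding isomorphic_def using iso_cmp by blast
definition zero_obj where "zero_obj Z \<longleftrightarrow> Z \<in> Ob C \<and> (\<forall>X\<in>Ob C. Hom C Z X = {zro C Z X} \<and> Hom C X Z = {zro C X Z})"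

lemma zero_obj_ex: "\<exists>Z. zero_obj Z" using zero_object_ex zero_obj_def by blast
lemma zero_obj_ob: "zero_obj Z \<Longrightarrow> Z \<in> Ob C" using zero_obj_def by blast
lemma zero_obj_from: "zero_obj Z \<Longrightarrow> arr f \<Longrightarrow> src f = Z \<Longrightarrow> f = zro C Z (tgt f)"
  using arr_Hom[of f] arr_objs(2)[of f] unfolding zero_obj_def by force
lemma zero_obj_idt: "zero_obj Z \<Longrightarrow> idt C Z = zro C Z Z"
  using zero_obj_from[of Z "idt C Z"] zero_obj_ob[of Z] by simp

lemma biprod_objs: "biprod C X X' Y i p i' p' \<Longrightarrow> X \<in> Ob C \<and> X' \<in> Ob C \<and> Y \<in> Ob C"
  unfolding biprod_def using hom_objs by blast

lemma iso_direct_summand: assumes "iso C P Q a" shows "is_direct_summand C P Q"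
proof -
  obtain b where h: "arr a" "src a = P" "tgt a = Q" "arr b" "src b = Q" "tgt b = P"
    "cmp C b a = idt C P" "cmp C a b = idt C Q" using isoE[OF assms] by blast
  obtain Z where z: "zero_obj Z" using zero_obj_ex by blast
  have o: "P \<in> Ob C" "Q \<in> Ob C" "Z \<in> Ob C" using h z zero_obj_ob by auto
  have "biprod C P Z Q a b (zro C Z Q) (zro C Q Z)"
    unfolding biprod_def hom_iff using h o zero_obj_idt[OF z] by auto
  then show ?thesis unfolding is_direct_summand_def using o by blast
qed

lemma biprod_transport:
  assumes b: "biprod C X X' Y i p i' p'" and c: "iso C Y Y2 c"
  obtains c' where "biprod C X X' Y2 (cmp C c i) (cmp C p c') (cmp C c i') (cmp C p' c')"
proof -
  obtain c' where c: "arr c" "src c = Y" "tgt c = Y2" "arr c'" "src c' = Y2" "tgt c' = Y"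
    "cmp C c' c = idt C Y" "cmp C c c' = idt C Y2" using isoE[OF c] by blast
  have bb: "arr i" "src i = X" "tgt i = Y" "arr p" "src p = Y" "tgt p = X"
     "arr i'" "src i' = X'" "tgt i' = Y" "arr p'" "src p' = Y" "tgt p' = X'"
     "cmp C p i = idt C X" "cmp C p' i' = idt C X'" "cmp C p i' = zro C X' X" "cmp C p' i = zro C X X'"
     "pls C (cmp C i p) (cmp C i' p') = idt C Y"
    by (insert b[unfolded biprod_def hom_iff], elim conjE, assumption)+
  have e: "cmp C (cmp C p c') (cmp C c i) = idt C X" "cmp C (cmp C p' c') (cmp C c i') = idt C X'"
    "cmp C (cmp C p c') (cmp C c i') = zro C X' X" "cmp C (cmp C p' c') (cmp C c i) = zro C X X'"
    using bb c by (simp_all add: cmp_inverse_cancel[OF c(7)])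
  have "pls C (cmp C c (cmp C i (cmp C p c'))) (cmp C c (cmp C i' (cmp C p' c')))
      = cmp C c (cmp C (pls C (cmp C i p) (cmp C i' p')) c')"
    using bb(1-12) c(1-6) by (simp add: cmp_pls_right cmp_pls_left)
  also have "\<dots> = idt C Y2" using bb(17) c by simp
  finally have sum: "pls C (cmp C c (cmp C i (cmp C p c'))) (cmp C c (cmp C i' (cmp C p' c'))) = idt C Y2" .
  have "biprod C X X' Y2 (cmp C c i) (cmp C p c') (cmp C c i') (cmp C p' c')"
    unfolding biprod_def hom_iff using bb(1-12) c(1-6) e sum by simp
  then show ?thesis by (rule that)
qed

lemma direct_summand_isomorphic:
  assumes "is_direct_summand C X Y" "isomorphic C Y Y2"
  shows "is_direct_summand C X Y2"
proof -
  obtain X' i p i' p' where X': "X' \<in> Ob C" and b: "biprod C X X' Y i p i' p'"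
    using assms(1) unfolding is_direct_summand_def by blast
  obtain c where c: "iso C Y Y2 c" using assms(2) unfolding isomorphic_def by blast
  obtain c' where "biprod C X X' Y2 (cmp C c i) (cmp C p c') (cmp C c i') (cmp C p' c')"
    using biprod_transport[OF b c] .
  then show ?thesis unfolding is_direct_summand_def using X' biprod_objs by blast
qed

lemma closed_under_isomorphic: "(\<forall>X Y. is_direct_summand C X Y \<longrightarrow> Y \<in> S \<longrightarrow> X \<in> S) \<Longrightarrow> isomorphic C P Q \<Longrightarrow> Q \<in> S \<Longrightarrow> P \<in> S"
proof -
  assume h: "\<forall>X Y. is_direct_summand C X Y \<longrightarrow> Y \<in> S \<longrightarrow> X \<in> S" "isomorphic C P Q" "Q \<in> S"
  obtain a where "iso C P Q a" using h(2) unfolding isomorphic_def by blast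
  then have "is_direct_summand C P Q" by (rule iso_direct_summand)
  then show "P \<in> S" using h by blast
qed

lemma biprod_replace_complement: assumes b: "biprod C X X' Y i p i' p'" and iso: "isomorphic C X0 X'"
  shows "\<exists>i2 p2. biprod C X X0 Y i p i2 p2"
proof -
  obtain be where "iso C X0 X' be" using iso unfolding isomorphic_def by blast
  then obtain be' where a: "arr be" "src be = X0" "tgt be = X'" "arr be'" "src be' = X'" "tgt be' = X0"
    "cmp C be' be = idt C X0" "cmp C be be' = idt C X'" using isoE by blast
  have bb: "arr i" "src i = X" "tgt i = Y" "arr p" "src p = Y" "tgt p = X"
     "arr i'" "src i' = X'" "tgt i' = Y" "arr p'" "src p' = Y" "tgt p' = X'"
     "cmp C p i = idt C X" "cmp C p' i' = idt C X'" "cmp C p i' = zro C X' X" "cmp C p' i = zro C X X'"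
     "pls C (cmp C i p) (cmp C i' p') = idt C Y"
    by (insert b[unfolded biprod_def hom_iff], elim conjE, assumption)+
  have o: "X \<in> Ob C" "X0 \<in> Ob C" "X' \<in> Ob C" using a bb arr_objs by metis+
  have e1: "cmp C (cmp C be' p') (cmp C i' be) = idt C X0"
    using a bb by (simp add: cmp_inverse_cancel[OF bb(14)])
  have e2: "cmp C p (cmp C i' be) = zro C X0 X" using a bb o by (simp flip: cmp_assoc)
  have e3: "cmp C (cmp C be' p') i = zro C X X0" using a bb o by simp
  have e4: "cmp C (cmp C i' be) (cmp C be' p') = cmp C i' p'" using a bb by (simp add: cmp_inverse_cancel[OF a(8)])
  have "biprod C X X0 Y i p (cmp C i' be) (cmp C be' p')"
    unfolding biprod_def hom_iff using a bb e1 e2 e3 e4 by simp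
  then show ?thesis by blast
qed

lemma biprod_swap: assumes b: "biprod C X X' Y i p i' p'" shows "biprod C X' X Y i' p' i p"
proof -
  have bb: "arr i" "src i = X" "tgt i = Y" "arr p" "src p = Y" "tgt p = X"
     "arr i'" "src i' = X'" "tgt i' = Y" "arr p'" "src p' = Y" "tgt p' = X'"
     "cmp C p i = idt C X" "cmp C p' i' = idt C X'" "cmp C p i' = zro C X' X" "cmp C p' i = zro C X X'"
     "pls C (cmp C i p) (cmp C i' p') = idt C Y"
    by (insert b[unfolded biprod_def hom_iff], elim conjE, assumption)+
  have "pls C (cmp C i' p') (cmp C i p) = pls C (cmp C i p) (cmp C i' p')"
    by (rule pls_commute_Hom) (use bb in \<open>simp_all add: hom_iff\<close>)
  then show ?thesis unfolding biprod_def hom_iff using bb by simp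
qed
lemma iso_cancel_left: assumes "iso C X Y f" "arr g" "arr h" "tgt g = X" "tgt h = X" "src g = src h" "cmp C f g = cmp C f h"
  shows "g = h"
proof -
  obtain f' where a: "arr f" "src f = X" "tgt f = Y" "arr f'" "src f' = Y" "tgt f' = X"
    "cmp C f' f = idt C X" "cmp C f f' = idt C Y" using isoE[OF assms(1)] by blast
  have "g = cmp C f' (cmp C f g)" using a assms(2-6) by (simp add: cmp_inverse_cancel[OF a(7)])
  also have "\<dots> = cmp C f' (cmp C f h)" using assms(7) by simp
  also have "\<dots> = h" using a assms(2-6) by (simp add: cmp_inverse_cancel[OF a(7)])
  finally show ?thesis .
qed
lemma iso_cancel_right: assumes "iso C X Y f" "arr g" "arr h" "src g = Y" "src h = Y" "tgt g = tgt h" "cmp C g f = cmp C h f"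
  shows "g = h"
proof -
  obtain f' where a: "arr f" "src f = X" "tgt f = Y" "arr f'" "src f' = Y" "tgt f' = X"
    "cmp C f' f = idt C X" "cmp C f f' = idt C Y" using isoE[OF assms(1)] by blast
  have "g = cmp C (cmp C g f) f'" using a assms(2-6) by simp
  also have "\<dots> = cmp C (cmp C h f) f'" using assms(7) by simp
  also have "\<dots> = h" using a assms(2-6) by simp
  finally show ?thesis .
qed
lemma rad_cmp_left:
  assumes f: "rad C X Y f" and e: "e \<in> Hom C Y Y'"
  shows "rad C X Y' (cmp C e f)"
  unfolding rad_def
proof
  have fH: "f \<in> Hom C X Y" using f unfolding rad_def by blast
  then show "cmp C e f \<in> Hom C X Y'" using e by (rule cmp_Hom)
  show "\<forall>g\<in>Hom C Y' X. iso C X X (mdiff C (idt C X) (cmp C g (cmp C e f)))"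
  proof
    fix g assume g: "g \<in> Hom C Y' X"
    have "cmp C g (cmp C e f) = cmp C (cmp C g e) f" using cmp_assoc_Hom[OF fH e g] .
    moreover have "cmp C g e \<in> Hom C Y X" using e g by (rule cmp_Hom)
    ultimately show "iso C X X (mdiff C (idt C X) (cmp C g (cmp C e f)))"
      using f unfolding rad_def by simp
  qed
qed

end

locale lin_functor = C: lin_cat C + D: lin_cat D
  for C :: "('o1,'m1,'f::comm_ring_1,'x) lcat_scheme" and D :: "('o2,'m2,'f,'y) lcat_scheme" +
  fixes FO :: "'o1 \<Rightarrow> 'o2" and FM :: "'m1 \<Rightarrow> 'm2"
  assumes FF: "F_linear_functor C D FO FM"
begin

lemma map_ob[simp]: "X \<in> Ob C \<Longrightarrow> FO X \<in> Ob D"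
  using FF unfolding F_linear_functor_def by blast
lemma map_Hom: "f \<in> Hom C X Y \<Longrightarrow> FM f \<in> Hom D (FO X) (FO Y)"
  using FF unfolding F_linear_functor_def by blast
lemma map_arr[simp]: "C.arr f \<Longrightarrow> D.arr (FM f)" "C.arr f \<Longrightarrow> D.src (FM f) = FO (C.src f)"
   "C.arr f \<Longrightarrow> D.tgt (FM f) = FO (C.tgt f)"
  using map_Hom[OF C.arr_Hom] D.hom_iff by blast+
lemma map_idt[simp]: "X \<in> Ob C \<Longrightarrow> FM (idt C X) = idt D (FO X)"
  using FF unfolding F_linear_functor_def by blast
lemma map_cmp[simp]: "C.arr f \<Longrightarrow> C.arr g \<Longrightarrow> C.tgt f = C.src g \<Longrightarrow> FM (cmp C g f) = cmp D (FM g) (FM f)"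
proof -
  assume h: "C.arr f" "C.arr g" "C.tgt f = C.src g"
  have "f \<in> Hom C (C.src f) (C.src g)" "g \<in> Hom C (C.src g) (C.tgt g)" using C.arr_Hom[OF h(1)] C.arr_Hom[OF h(2)] h by simp_all
  then show ?thesis using FF unfolding F_linear_functor_def by blast
qed
lemma map_pls[simp]: "C.arr f \<Longrightarrow> C.arr g \<Longrightarrow> C.src f = C.src g \<Longrightarrow> C.tgt f = C.tgt g \<Longrightarrow> FM (pls C f g) = pls D (FM f) (FM g)"
proof -
  assume h: "C.arr f" "C.arr g" "C.src f = C.src g" "C.tgt f = C.tgt g"
  have "f \<in> Hom C (C.src f) (C.tgt f)" "g \<in> Hom C (C.src f) (C.tgt f)" using C.arr_Hom[OF h(1)] C.arr_Hom[OF h(2)] h by simp_all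
  then show ?thesis using FF unfolding F_linear_functor_def by blast
qed
lemma map_smul[simp]: "C.arr f \<Longrightarrow> FM (smul C a f) = smul D a (FM f)"
proof -
  assume h: "C.arr f"
  have "f \<in> Hom C (C.src f) (C.tgt f)" using h C.arr_Hom by auto
  then show ?thesis using FF unfolding F_linear_functor_def by blast
qed
lemma map_mdiff[simp]: "C.arr f \<Longrightarrow> C.arr g \<Longrightarrow> C.src f = C.src g \<Longrightarrow> C.tgt f = C.tgt g \<Longrightarrow> FM (mdiff C f g) = mdiff D (FM f) (FM g)"
  unfolding mdiff_def by simp
lemma map_zro[simp]: assumes "X \<in> Ob C" "Y \<in> Ob C" shows "FM (zro C X Y) = zro D (FO X) (FO Y)"
proof -
  let ?z = "zro C X Y"
  have e: "pls C ?z (smul C (-1) ?z) = ?z" using assms by simp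
  have "FM ?z = FM (pls C ?z (smul C (-1) ?z))" by (simp only: e)
  also have "\<dots> = pls D (FM ?z) (FM (smul C (-1) ?z))" by (rule map_pls) (use assms in simp_all)
  also have "\<dots> = pls D (FM ?z) (smul D (-1) (FM ?z))" by (subst map_smul) (use assms in simp_all)
  also have "\<dots> = zro D (FO X) (FO Y)" using assms by simp
  finally show ?thesis .
qed

lemma map_cmp_eq: "C.arr f \<Longrightarrow> C.arr g \<Longrightarrow> C.tgt f = C.src g \<Longrightarrow> cmp C g f = h \<Longrightarrow> cmp D (FM g) (FM f) = FM h"
  using map_cmp by metis

lemma map_iso: assumes "iso C X Y f" shows "iso D (FO X) (FO Y) (FM f)"
proof -
  obtain g where h: "C.arr f" "C.src f = X" "C.tgt f = Y" "C.arr g" "C.src g = Y" "C.tgt g = X"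
    "cmp C g f = idt C X" "cmp C f g = idt C Y" using C.isoE[OF assms] by blast
  have o: "X \<in> Ob C" "Y \<in> Ob C" using h C.arr_objs by auto
  have e: "cmp D (FM g) (FM f) = idt D (FO X)" "cmp D (FM f) (FM g) = idt D (FO Y)"
    using map_cmp_eq[OF h(1) h(4) _ h(7)] map_cmp_eq[OF h(4) h(1) _ h(8)] h o by simp_all
  show ?thesis by (rule D.isoI[where g="FM g"]) (use h e in simp_all)
qed

lemma map_isomorphic: "isomorphic C X Y \<Longrightarrow> isomorphic D (FO X) (FO Y)"
  unfolding isomorphic_def using map_iso by blast

lemma map_biprod: assumes "biprod C X X' Y i p i' p'"
  shows "biprod D (FO X) (FO X') (FO Y) (FM i) (FM p) (FM i') (FM p')"
proof -
  have bb: "C.arr i" "C.src i = X" "C.tgt i = Y" "C.arr p" "C.src p = Y" "C.tgt p = X"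
     "C.arr i'" "C.src i' = X'" "C.tgt i' = Y" "C.arr p'" "C.src p' = Y" "C.tgt p' = X'"
     "cmp C p i = idt C X" "cmp C p' i' = idt C X'" "cmp C p i' = zro C X' X" "cmp C p' i = zro C X X'"
     "pls C (cmp C i p) (cmp C i' p') = idt C Y"
    by (insert assms[unfolded biprod_def C.hom_iff], elim conjE, assumption)+
  have o: "X \<in> Ob C" "Y \<in> Ob C" "X' \<in> Ob C" using bb C.arr_objs by metis+
  have e: "cmp D (FM p) (FM i) = idt D (FO X)" "cmp D (FM p') (FM i') = idt D (FO X')"
    "cmp D (FM p) (FM i') = zro D (FO X') (FO X)" "cmp D (FM p') (FM i) = zro D (FO X) (FO X')"
    using map_cmp_eq[OF bb(1) bb(4) _ bb(13)] map_cmp_eq[OF bb(7) bb(10) _ bb(14)]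
      map_cmp_eq[OF bb(7) bb(4) _ bb(15)] map_cmp_eq[OF bb(1) bb(10) _ bb(16)] bb o by simp_all
  have "FM (pls C (cmp C i p) (cmp C i' p')) = pls D (FM (cmp C i p)) (FM (cmp C i' p'))"
    by (rule map_pls) (use bb in simp_all)
  then have e5: "pls D (cmp D (FM i) (FM p)) (cmp D (FM i') (FM p')) = idt D (FO Y)"
    using bb o by (simp add: bb(17))
  show ?thesis unfolding biprod_def D.hom_iff using e e5 bb o by simp
qed

lemma map_direct_summand: "is_direct_summand C X Y \<Longrightarrow> is_direct_summand D (FO X) (FO Y)"
  unfolding is_direct_summand_def using map_biprod map_ob by blast

lemma map_rad:
  assumes f: "rad C X Y f" and full: "Hom D (FO Y) (FO X) \<subseteq> FM ` Hom C Y X"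
  shows "rad D (FO X) (FO Y) (FM f)"
  unfolding rad_def
proof
  have fH: "f \<in> Hom C X Y" using f unfolding rad_def by blast
  then show "FM f \<in> Hom D (FO X) (FO Y)" by (rule map_Hom)
  show "\<forall>g'\<in>Hom D (FO Y) (FO X). iso D (FO X) (FO X) (mdiff D (idt D (FO X)) (cmp D g' (FM f)))"
  proof
    fix g' assume "g' \<in> Hom D (FO Y) (FO X)"
    then obtain g where g: "g \<in> Hom C Y X" "FM g = g'" using full by blast
    have "iso C X X (mdiff C (idt C X) (cmp C g f))" using f g(1) unfolding rad_def by blast
    then have "iso D (FO X) (FO X) (FM (mdiff C (idt C X) (cmp C g f)))" by (rule map_iso)
    moreover have "FM (mdiff C (idt C X) (cmp C g f)) = mdiff D (idt D (FO X)) (cmp D g' (FM f))"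
      using fH g C.hom_objs[OF fH] by (simp add: C.hom_iff)
    ultimately show "iso D (FO X) (FO X) (mdiff D (idt D (FO X)) (cmp D g' (FM f)))" by simp
  qed
qed

end

locale tri_cat =
  fixes C :: "('o,'m,'f::comm_ring_1,'x) tcat_scheme"
  assumes T: "triangulated C"

sublocale tri_cat \<subseteq> lin_cat C
  using T unfolding triangulated_def by unfold_locales blast

sublocale tri_cat \<subseteq> shift: lin_functor C C "shO C" "shM C"
  using T unfolding triangulated_def by unfold_locales blast

context tri_cat begin

lemma shift_bij: "X \<in> Ob C \<Longrightarrow> Y \<in> Ob C \<Longrightarrow> bij_betw (shM C) (Hom C X Y) (Hom C (shO C X) (shO C Y))"
  using T by (simp add: triangulated_def)
lemma shift_ess_surj: "Y \<in> Ob C \<Longrightarrow> \<exists>X\<in>Ob C. isomorphic C (shO C X) Y"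
  using T by (simp add: triangulated_def)
lemma distinguished_triangle: "(X,Y,Z,f,g,h) \<in> tri C \<Longrightarrow> triangle C X Y Z f g h"
  using T unfolding triangulated_def by (elim conjE) (drule (1) bspec, simp)
lemma TR1: "(X,Y,Z,f,g,h) \<in> tri C \<Longrightarrow>
        triangle C X' Y' Z' f' g' h' \<Longrightarrow> iso C X X' a \<Longrightarrow> iso C Y Y' b \<Longrightarrow> iso C Z Z' c \<Longrightarrow>
        cmp C f' a = cmp C b f \<Longrightarrow> cmp C g' b = cmp C c g \<Longrightarrow>
        cmp C h' c = cmp C (shM C a) h \<Longrightarrow> (X',Y',Z',f',g',h') \<in> tri C"
  using T by (simp add: triangulated_def)
lemma tri_idt: "X \<in> Ob C \<Longrightarrow> \<exists>Z0. zero_obj Z0 \<and> (X, X, Z0, idt C X, zro C X Z0, zro C Z0 (shO C X)) \<in> tri C"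
  using T unfolding triangulated_def zero_obj_def by auto
lemma cone_ex: "f \<in> Hom C X Y \<Longrightarrow> \<exists>Z g h. (X,Y,Z,f,g,h) \<in> tri C"
  using T by (simp add: triangulated_def)
lemma TR2: "triangle C X Y Z f g h \<Longrightarrow>
        ((X,Y,Z,f,g,h) \<in> tri C \<longleftrightarrow> (Y, Z, shO C X, g, h, smul C (-1) (shM C f)) \<in> tri C)"
  using T by (simp add: triangulated_def)
lemma TR3: "(X,Y,Z,f,g,h) \<in> tri C \<Longrightarrow>
        (X',Y',Z',f',g',h') \<in> tri C \<Longrightarrow> a \<in> Hom C X X' \<Longrightarrow> b \<in> Hom C Y Y' \<Longrightarrow>
        cmp C b f = cmp C f' a \<Longrightarrow>
        (\<exists>c\<in>Hom C Z Z'. cmp C c g = cmp C g' b \<and> cmp C (shM C a) h = cmp C h' c)"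
  using T by (simp add: triangulated_def)

lemma distinguishedD: assumes "(X,Y,Z,f,g,h) \<in> tri C"
  shows "X \<in> Ob C" "Y \<in> Ob C" "Z \<in> Ob C" "arr f" "src f = X" "tgt f = Y" "arr g" "src g = Y" "tgt g = Z"
    "arr h" "src h = Z" "tgt h = shO C X"
  using distinguished_triangle[OF assms] unfolding triangle_def hom_iff by blast+

lemma rotate: "(X,Y,Z,f,g,h) \<in> tri C \<Longrightarrow> (Y, Z, shO C X, g, h, smul C (-1) (shM C f)) \<in> tri C"
  using TR2 distinguished_triangle by blast

lemma shift_inj: "arr f \<Longrightarrow> arr g \<Longrightarrow> src f = src g \<Longrightarrow> tgt f = tgt g \<Longrightarrow> shM C f = shM C g \<Longrightarrow> f = g"
proof -
  assume h: "arr f" "arr g" "src f = src g" "tgt f = tgt g" "shM C f = shM C g"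
  have i: "inj_on (shM C) (Hom C (src f) (tgt f))" using shift_bij[of "src f" "tgt f"] h(1) unfolding bij_betw_def by simp
  have m: "f \<in> Hom C (src f) (tgt f)" "g \<in> Hom C (src f) (tgt f)" using h by (simp_all add: hom_iff)
  show "f = g" by (rule inj_onD[OF i h(5) m])
qed

lemma shift_full: "X \<in> Ob C \<Longrightarrow> Y \<in> Ob C \<Longrightarrow> arr g \<Longrightarrow> src g = shO C X \<Longrightarrow> tgt g = shO C Y \<Longrightarrow>
   \<exists>f. arr f \<and> src f = X \<and> tgt f = Y \<and> shM C f = g"
proof -
  assume h: "X \<in> Ob C" "Y \<in> Ob C" "arr g" "src g = shO C X" "tgt g = shO C Y"
  have "g \<in> shM C ` Hom C X Y" using shift_bij[OF h(1,2)] h(3-5) unfolding bij_betw_def by (simp add: hom_iff)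
  then obtain f where "f \<in> Hom C X Y" "g = shM C f" by blast
  then show ?thesis by (auto simp: hom_iff)
qed

lemma shift_reflects_isomorphic: assumes "X \<in> Ob C" "Y \<in> Ob C" "isomorphic C (shO C X) (shO C Y)"
  shows "isomorphic C X Y"
proof -
  obtain al where "iso C (shO C X) (shO C Y) al" using assms(3) unfolding isomorphic_def by blast
  then obtain be where h: "arr al" "src al = shO C X" "tgt al = shO C Y" "arr be" "src be = shO C Y" "tgt be = shO C X"
    "cmp C be al = idt C (shO C X)" "cmp C al be = idt C (shO C Y)" using isoE by blast
  obtain a where a: "arr a" "src a = X" "tgt a = Y" "shM C a = al" using shift_full[OF assms(1,2) h(1-3)] by blast
  obtain b where b: "arr b" "src b = Y" "tgt b = X" "shM C b = be" using shift_full[OF assms(2,1) h(4-6)] by blast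
  have q1: "shM C (cmp C b a) = shM C (idt C X)" using a b h assms by simp
  have e1: "cmp C b a = idt C X" by (rule shift_inj[OF _ _ _ _ q1]) (use a b assms in simp_all)
  have q2: "shM C (cmp C a b) = shM C (idt C Y)" using a b h assms by simp
  have e2: "cmp C a b = idt C Y" by (rule shift_inj[OF _ _ _ _ q2]) (use a b assms in simp_all)
  have "iso C X Y a" by (rule isoI[where g=b]) (use a b e1 e2 in simp_all)
  then show ?thesis unfolding isomorphic_def by blast
qed

abbreviation shifts where "shifts k \<equiv> shO C ^^ k"
abbreviation shiftsM where "shiftsM k \<equiv> shM C ^^ k"

lemma shifts_ob[simp]: "X \<in> Ob C \<Longrightarrow> shifts k X \<in> Ob C"
  by (induction k) auto

lemma shiftsM_bij: "X \<in> Ob C \<Longrightarrow> Y \<in> Ob C \<Longrightarrow> bij_betw (shiftsM k) (Hom C X Y) (Hom C (shifts k X) (shifts k Y))"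
proof (induction k)
  case 0 then show ?case by (simp add: bij_betw_def)
next
  case (Suc k)
  have "bij_betw (shM C \<circ> shiftsM k) (Hom C X Y) (Hom C (shO C (shifts k X)) (shO C (shifts k Y)))"
    by (rule bij_betw_trans[OF Suc.IH[OF Suc.prems]]) (rule shift_bij; simp add: Suc.prems)
  then show ?case by (simp add: comp_def)
qed

lemma arr_shiftsM[simp]: "arr f \<Longrightarrow> arr (shiftsM k f)" "arr f \<Longrightarrow> src (shiftsM k f) = shifts k (src f)"
   "arr f \<Longrightarrow> tgt (shiftsM k f) = shifts k (tgt f)"
  by (induction k) auto

lemma shiftsM_zro[simp]: "X \<in> Ob C \<Longrightarrow> Y \<in> Ob C \<Longrightarrow> shiftsM k (zro C X Y) = zro C (shifts k X) (shifts k Y)"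
  by (induction k) auto

lemma shiftsM_inj: "arr f \<Longrightarrow> arr g \<Longrightarrow> src f = src g \<Longrightarrow> tgt f = tgt g \<Longrightarrow> shiftsM k f = shiftsM k g \<Longrightarrow> f = g"
proof -
  assume h: "arr f" "arr g" "src f = src g" "tgt f = tgt g" "shiftsM k f = shiftsM k g"
  have i: "inj_on (shiftsM k) (Hom C (src f) (tgt f))" using shiftsM_bij[of "src f" "tgt f" k] h(1) unfolding bij_betw_def by simp
  have m: "f \<in> Hom C (src f) (tgt f)" "g \<in> Hom C (src f) (tgt f)" using h by (simp_all add: hom_iff)
  show "f = g" by (rule inj_onD[OF i h(5) m])
qed

lemma shifts_isomorphic: "isomorphic C X Y \<Longrightarrow> isomorphic C (shifts k X) (shifts k Y)"
  by (induction k) (auto intro: shift.map_isomorphic)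

lemma shifts_reflects_isomorphic: "X \<in> Ob C \<Longrightarrow> Y \<in> Ob C \<Longrightarrow> isomorphic C (shifts k X) (shifts k Y) \<Longrightarrow> isomorphic C X Y"
proof (induction k)
  case 0 then show ?case by simp
next
  case (Suc k)
  have "isomorphic C (shifts k X) (shifts k Y)" by (rule shift_reflects_isomorphic) (use Suc.prems in simp_all)
  then show ?case using Suc.IH Suc.prems by blast
qed

lemma shifts_direct_summand: "is_direct_summand C X Y \<Longrightarrow> is_direct_summand C (shifts k X) (shifts k Y)"
  by (induction k) (auto intro: shift.map_direct_summand)

lemma shift_zero_obj_idt: "zero_obj Z \<Longrightarrow> idt C (shO C Z) = zro C (shO C Z) (shO C Z)"
proof -
  assume z: "zero_obj Z"
  have o: "Z \<in> Ob C" using z zero_obj_ob by blast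
  have "idt C (shO C Z) = shM C (idt C Z)" using o by simp
  also have "\<dots> = shM C (zro C Z Z)" using zero_obj_idt[OF z] by simp
  also have "\<dots> = zro C (shO C Z) (shO C Z)" using o by simp
  finally show ?thesis .
qed

lemma tri_zero_idt: assumes X: "X \<in> Ob C"
  shows "\<exists>Z0. zero_obj Z0 \<and> (Z0, X, X, zro C Z0 X, idt C X, zro C X (shO C Z0)) \<in> tri C"
proof -
  obtain Z0 where z: "zero_obj Z0" and t: "(X, X, Z0, idt C X, zro C X Z0, zro C Z0 (shO C X)) \<in> tri C"
    using tri_idt[OF X] by blast
  have o: "Z0 \<in> Ob C" "shO C Z0 \<in> Ob C" using z zero_obj_ob by auto
  \<comment> \<open>rotating back requires Z0[1] in place of Z0; both are zero objects, so TR1 applies\<close>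
  have ic: "iso C Z0 (shO C Z0) (zro C Z0 (shO C Z0))"
    by (rule isoI[where g="zro C (shO C Z0) Z0"]) (use o X z zero_obj_idt shift_zero_obj_idt in auto)
  have t2: "(X, X, shO C Z0, idt C X, zro C X (shO C Z0), zro C (shO C Z0) (shO C X)) \<in> tri C"
    by (rule TR1[OF t _ iso_idt[OF X] iso_idt[OF X] ic]) (use o X in \<open>simp_all add: triangle_def hom_iff\<close>)
  have tri0: "triangle C Z0 X X (zro C Z0 X) (idt C X) (zro C X (shO C Z0))"
    using o X by (simp add: triangle_def hom_iff)
  have "(Z0, X, X, zro C Z0 X, idt C X, zro C X (shO C Z0)) \<in> tri C"
    using TR2[OF tri0] t2 o X by simp
  then show ?thesis using z by blast
qed

lemma tri_cmp_zro: assumes t: "(X,Y,Z,f,g,h) \<in> tri C" shows "cmp C g f = zro C X Z"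
proof -
  note d = distinguishedD[OF t]
  obtain Z0 where z: "zero_obj Z0" and t0: "(X, X, Z0, idt C X, zro C X Z0, zro C Z0 (shO C X)) \<in> tri C"
    using tri_idt[OF d(1)] by blast
  have o: "Z0 \<in> Ob C" using z zero_obj_ob by auto
  have ha: "idt C X \<in> Hom C X X" and hb: "f \<in> Hom C X Y" using d by (simp_all add: hom_iff)
  have eq: "cmp C f (idt C X) = cmp C f (idt C X)" by simp
  obtain c where c: "c \<in> Hom C Z0 Z" "cmp C c (zro C X Z0) = cmp C g f"
    using TR3[OF t0 t ha hb eq] d by auto
  then show ?thesis using d o by (simp add: hom_iff)
qed

lemma tri_factor_through_cone: assumes t: "(X,Y,Z,f,g,h) \<in> tri C" and u: "arr u" "src u = Y" "cmp C u f = zro C X (tgt u)"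
  shows "\<exists>v. arr v \<and> src v = Z \<and> tgt v = tgt u \<and> cmp C v g = u"
proof -
  note d = distinguishedD[OF t]
  have W: "tgt u \<in> Ob C" using u by simp
  obtain Z0 where z: "zero_obj Z0" and t0: "(Z0, tgt u, tgt u, zro C Z0 (tgt u), idt C (tgt u), zro C (tgt u) (shO C Z0)) \<in> tri C"
    using tri_zero_idt[OF W] by blast
  have o: "Z0 \<in> Ob C" using z zero_obj_ob by auto
  have ha: "zro C X Z0 \<in> Hom C X Z0" and hb: "u \<in> Hom C Y (tgt u)" using d o u by (simp_all add: hom_iff)
  have eq: "cmp C u f = cmp C (zro C Z0 (tgt u)) (zro C X Z0)" using u d o by simp
  obtain c where c: "c \<in> Hom C Z (tgt u)" "cmp C c g = cmp C (idt C (tgt u)) u"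
    using TR3[OF t t0 ha hb eq] by blast
  then show ?thesis using u by (auto simp: hom_iff)
qed

lemma tri_factor_through_base: assumes t: "(X,Y,Z,f,g,h) \<in> tri C" and u: "arr u" "tgt u = Y" "cmp C g u = zro C (src u) Z"
  shows "\<exists>v. arr v \<and> src v = src u \<and> tgt v = X \<and> cmp C f v = u"
proof -
  note d = distinguishedD[OF t]
  let ?W = "src u"
  have W: "?W \<in> Ob C" using u by simp
  obtain Z0 where z: "zero_obj Z0" and t0: "(?W, ?W, Z0, idt C ?W, zro C ?W Z0, zro C Z0 (shO C ?W)) \<in> tri C"
    using tri_idt[OF W] by blast
  have o: "Z0 \<in> Ob C" using z zero_obj_ob by auto
  have t0': "(?W, Z0, shO C ?W, zro C ?W Z0, zro C Z0 (shO C ?W), smul C (-1) (shM C (idt C ?W))) \<in> tri C"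
    using rotate[OF t0] .
  have t': "(Y, Z, shO C X, g, h, smul C (-1) (shM C f)) \<in> tri C" using rotate[OF t] .
  have ha: "u \<in> Hom C ?W Y" and hb: "zro C Z0 Z \<in> Hom C Z0 Z" using d o u by (simp_all add: hom_iff)
  have eq: "cmp C (zro C Z0 Z) (zro C ?W Z0) = cmp C g u" using u d o by simp
  obtain c where c: "c \<in> Hom C (shO C ?W) (shO C X)"
    "cmp C (shM C u) (smul C (-1) (shM C (idt C ?W))) = cmp C (smul C (-1) (shM C f)) c"
    using TR3[OF t0' t' ha hb eq] by blast
  have cc: "arr c" "src c = shO C ?W" "tgt c = shO C X" using c(1) by (simp_all add: hom_iff)
  have "smul C (-1) (shM C u) = smul C (-1) (cmp C (shM C f) c)" using c(2) u d cc by simp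
  then have "smul C (-1) (smul C (-1) (shM C u)) = smul C (-1) (smul C (-1) (cmp C (shM C f) c))" by simp
  then have e: "shM C u = cmp C (shM C f) c" using u d cc by simp
  obtain v where v: "arr v" "src v = ?W" "tgt v = X" "shM C v = c" using shift_full[OF W d(1) cc] by blast
  have "shM C u = shM C (cmp C f v)" using e v d by simp
  then have "u = cmp C f v" by (rule shift_inj[rotated 4]) (use u v d in simp_all)
  then show ?thesis using v by blast
qed

lemma split_mono_cone_section:
  assumes t: "(Z, Z1, W, s, t, e) \<in> tri C" and p: "arr p" "src p = Z1" "tgt p = Z"
    and ps: "cmp C p s = idt C Z"
  obtains q where "arr q" "src q = W" "tgt q = Z1" "cmp C t q = idt C W" "cmp C p q = zro C W Z"
proof -
  note d = distinguishedD[OF t]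
  have t': "(Z1, W, shO C Z, t, e, smul C (-1) (shM C s)) \<in> tri C" using rotate[OF t] .
  have "cmp C (smul C (-1) (shM C s)) e = zro C W (shO C Z1)" using tri_cmp_zro[OF rotate[OF t']] .
  then have "smul C (-1) (smul C (-1) (cmp C (shM C s) e)) = smul C (-1) (zro C W (shO C Z1))"
    using d by simp
  then have se: "cmp C (shM C s) e = zro C W (shO C Z1)" using d by simp
  \<comment> \<open>e vanishes since the split monomorphism shM s kills it\<close>
  have "e = cmp C (shM C (cmp C p s)) e" using ps d by simp
  also have "\<dots> = cmp C (shM C p) (cmp C (shM C s) e)" using d p by simp
  also have "\<dots> = zro C W (shO C Z)" using se d p by simp
  finally have "cmp C e (idt C W) = zro C (src (idt C W)) (shO C Z)" using d by simp
  then obtain q where q: "arr q" "src q = W" "tgt q = Z1" "cmp C t q = idt C W"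
    using tri_factor_through_base[OF t', of "idt C W"] d by auto
  \<comment> \<open>correct q by its component along s, so that p kills it\<close>
  define q' where "q' = mdiff C q (cmp C s (cmp C p q))"
  have "arr q'" "src q' = W" "tgt q' = Z1" using q d p unfolding q'_def by simp_all
  moreover have "cmp C t q' = idt C W" unfolding q'_def
    using q d p by (simp add: cmp_mdiff_right tri_cmp_zro[OF t] flip: cmp_assoc)
  moreover have "cmp C p q' = zro C W Z" unfolding q'_def
    using q d p by (simp add: cmp_mdiff_right cmp_inverse_cancel[OF ps])
  ultimately show ?thesis by (rule that)
qed

lemma retract_direct_summand:
  assumes s: "arr s" "src s = Z" "tgt s = Z1" and p: "arr p" "src p = Z1" "tgt p = Z"
    and ps: "cmp C p s = idt C Z"
  shows "is_direct_summand C Z Z1"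
proof -
  have oZ: "Z \<in> Ob C" "Z1 \<in> Ob C" using s by auto
  obtain W t e where t: "(Z, Z1, W, s, t, e) \<in> tri C" using cone_ex s by (metis hom_iff)
  note d = distinguishedD[OF t]
  have ts: "cmp C t s = zro C Z W" using tri_cmp_zro[OF t] .
  obtain q where q: "arr q" "src q = W" "tgt q = Z1" "cmp C t q = idt C W" "cmp C p q = zro C W Z"
    using split_mono_cone_section[OF t p ps] .
  \<comment> \<open>pi kills s, hence factors through t; it also kills q, and t q = 1, so pi = 0\<close>
  define pi where "pi = mdiff C (idt C Z1) (pls C (cmp C s p) (cmp C q t))"
  have pi: "arr pi" "src pi = Z1" "tgt pi = Z1" using q s p d oZ unfolding pi_def by simp_all
  have pis: "cmp C pi s = zro C Z (tgt pi)" unfolding pi_def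
    using q s p d oZ by (simp add: cmp_mdiff_left cmp_pls_left ts ps)
  obtain v where v: "arr v" "src v = W" "tgt v = Z1" "cmp C v t = pi"
    using tri_factor_through_cone[OF t pi(1) pi(2) pis] pi by auto
  have piq: "cmp C pi q = zro C W Z1" unfolding pi_def
    using q s p d oZ by (simp add: cmp_mdiff_left cmp_pls_left)
  have "v = cmp C v (cmp C t q)" using q v by simp
  also have "\<dots> = cmp C pi q" using v(1-3) q d by (simp flip: v(4))
  finally have "v = zro C W Z1" using piq by simp
  then have "pi = zro C Z1 Z1" using v d by (simp flip: v(4))
  then have md: "mdiff C (idt C Z1) (pls C (cmp C s p) (cmp C q t)) = zro C Z1 Z1" unfolding pi_def .
  have "idt C Z1 = pls C (cmp C s p) (cmp C q t)"
    by (rule mdiff_eq_zro) (use md q s p d oZ in simp_all)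
  then have "biprod C Z W Z1 s p q t"
    unfolding biprod_def hom_iff using s p q d ps ts by simp
  then show ?thesis unfolding is_direct_summand_def using oZ d by blast
qed

lemma biprod_unshift: assumes b: "biprod C (shO C U) (shO C U') (shO C Y) i p i' p'"
  and o: "U \<in> Ob C" "U' \<in> Ob C" "Y \<in> Ob C"
  shows "\<exists>i0 p0 i0' p0'. biprod C U U' Y i0 p0 i0' p0'"
proof -
  have bb: "arr i" "src i = shO C U" "tgt i = shO C Y" "arr p" "src p = shO C Y" "tgt p = shO C U"
     "arr i'" "src i' = shO C U'" "tgt i' = shO C Y" "arr p'" "src p' = shO C Y" "tgt p' = shO C U'"
     "cmp C p i = idt C (shO C U)" "cmp C p' i' = idt C (shO C U')" "cmp C p i' = zro C (shO C U') (shO C U)"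
     "cmp C p' i = zro C (shO C U) (shO C U')"
     "pls C (cmp C i p) (cmp C i' p') = idt C (shO C Y)"
    by (insert b[unfolded biprod_def hom_iff], elim conjE, assumption)+
  obtain i0 where i0: "arr i0" "src i0 = U" "tgt i0 = Y" "shM C i0 = i" using shift_full[OF o(1) o(3) bb(1-3)] by blast
  obtain p0 where p0: "arr p0" "src p0 = Y" "tgt p0 = U" "shM C p0 = p" using shift_full[OF o(3) o(1) bb(4-6)] by blast
  obtain i1 where i1: "arr i1" "src i1 = U'" "tgt i1 = Y" "shM C i1 = i'" using shift_full[OF o(2) o(3) bb(7-9)] by blast
  obtain p1 where p1: "arr p1" "src p1 = Y" "tgt p1 = U'" "shM C p1 = p'" using shift_full[OF o(3) o(2) bb(10-12)] by blast
  have q1: "shM C (cmp C p0 i0) = shM C (idt C U)" using i0 p0 bb o by simp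
  have e1: "cmp C p0 i0 = idt C U" by (rule shift_inj[OF _ _ _ _ q1]) (use i0 p0 o in simp_all)
  have q2: "shM C (cmp C p1 i1) = shM C (idt C U')" using i1 p1 bb o by simp
  have e2: "cmp C p1 i1 = idt C U'" by (rule shift_inj[OF _ _ _ _ q2]) (use i1 p1 o in simp_all)
  have q3: "shM C (cmp C p0 i1) = shM C (zro C U' U)" using i1 p0 bb o by simp
  have e3: "cmp C p0 i1 = zro C U' U" by (rule shift_inj[OF _ _ _ _ q3]) (use i1 p0 o in simp_all)
  have q4: "shM C (cmp C p1 i0) = shM C (zro C U U')" using i0 p1 bb o by simp
  have e4: "cmp C p1 i0 = zro C U U'" by (rule shift_inj[OF _ _ _ _ q4]) (use i0 p1 o in simp_all)
  have "shM C (pls C (cmp C i0 p0) (cmp C i1 p1)) = pls C (shM C (cmp C i0 p0)) (shM C (cmp C i1 p1))"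
    by (rule shift.map_pls) (use i0 p0 i1 p1 in simp_all)
  then have q5: "shM C (pls C (cmp C i0 p0) (cmp C i1 p1)) = shM C (idt C Y)" using i0 p0 i1 p1 bb o by simp
  have e5: "pls C (cmp C i0 p0) (cmp C i1 p1) = idt C Y" by (rule shift_inj[OF _ _ _ _ q5]) (use i0 p0 i1 p1 o in simp_all)
  have "biprod C U U' Y i0 p0 i1 p1" unfolding biprod_def hom_iff using i0 p0 i1 p1 e1 e2 e3 e4 e5 by simp
  then show ?thesis by blast
qed

lemma direct_summand_of_shift: assumes "is_direct_summand C W (shO C Y)" "Y \<in> Ob C"
  shows "\<exists>W'. is_direct_summand C W' Y \<and> isomorphic C W (shO C W')"
proof -
  obtain W2 i p i' p' where W2: "W2 \<in> Ob C" and b: "biprod C W W2 (shO C Y) i p i' p'"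
    using assms(1) unfolding is_direct_summand_def by blast
  have oW: "W \<in> Ob C" using b biprod_objs by blast
  obtain U where U: "U \<in> Ob C" "isomorphic C (shO C U) W" using shift_ess_surj[OF oW] by blast
  obtain U' where U': "U' \<in> Ob C" "isomorphic C (shO C U') W2" using shift_ess_surj[OF W2] by blast
  obtain i2 p2 where b2: "biprod C W (shO C U') (shO C Y) i p i2 p2" using biprod_replace_complement[OF b U'(2)] by blast
  obtain i3 p3 where b3: "biprod C (shO C U') (shO C U) (shO C Y) i2 p2 i3 p3"
    using biprod_replace_complement[OF biprod_swap[OF b2] U(2)] by blast
  obtain i0 p0 i0' p0' where "biprod C U U' Y i0 p0 i0' p0'"
    using biprod_unshift[OF biprod_swap[OF b3] U(1) U'(1) assms(2)] by blast
  then have "is_direct_summand C U Y" unfolding is_direct_summand_def using U U' assms(2) by blast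
  then show ?thesis using U(2) isomorphic_sym by blast
qed

lemma direct_summand_of_shifts: assumes "is_direct_summand C W (shifts k Y)" "Y \<in> Ob C"
  shows "\<exists>W'. is_direct_summand C W' Y \<and> isomorphic C W (shifts k W')"
  using assms(1)
proof (induction k arbitrary: W)
  case 0
  then have h: "is_direct_summand C W Y" by simp
  then have "W \<in> Ob C" unfolding is_direct_summand_def by blast
  then have "isomorphic C W (shifts 0 W)" using isomorphic_refl by simp
  then show ?case using h by blast
next
  case (Suc k)
  have "is_direct_summand C W (shO C (shifts k Y))" using Suc.prems by simp
  then obtain W1 where W1: "is_direct_summand C W1 (shifts k Y)" "isomorphic C W (shO C W1)"
    using direct_summand_of_shift[of W "shifts k Y"] assms(2) by auto
  obtain W' where W': "is_direct_summand C W' Y" "isomorphic C W1 (shifts k W')" using Suc.IH[OF W1(1)] by blast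
  have "isomorphic C (shO C W1) (shO C (shifts k W'))" using shift.map_isomorphic[OF W'(2)] .
  then have "isomorphic C W (shifts (Suc k) W')" using W1(2) isomorphic_trans by simp
  then show ?case using W' by blast
qed

lemma shifted_class_iff: "X \<in> shifted_class C S n \<longleftrightarrow> X \<in> Ob C \<and> (\<exists>Y\<in>S. \<exists>j k::nat. n = int k - int j \<and> isomorphic C (shifts j X) (shifts k Y))"
  unfolding shifted_class_def by blast

lemma shifted_class_ob: "X \<in> shifted_class C S n \<Longrightarrow> X \<in> Ob C"
  using shifted_class_iff by blast

lemma shifts_shO_commute: "shifts j (shO C X) = shO C (shifts j X)"
  by (simp add: funpow_swap1)

lemma shifted_class_shift: assumes "X \<in> shifted_class C S m" shows "shO C X \<in> shifted_class C S (m + 1)"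
proof -
  obtain Y j k where h: "X \<in> Ob C" "Y \<in> S" "m = int k - int j" "isomorphic C (shifts j X) (shifts k Y)"
    using assms shifted_class_iff by blast
  have "isomorphic C (shifts j (shO C X)) (shifts (Suc k) Y)"
    using shift.map_isomorphic[OF h(4)] by (simp add: shifts_shO_commute)
  moreover have "m + 1 = int (Suc k) - int j" using h(3) by simp
  moreover have "shO C X \<in> Ob C" using h(1) by simp
  ultimately show ?thesis unfolding shifted_class_iff using h(2) by blast
qed

lemma shifted_class_shifts: assumes "S \<subseteq> Ob C" "Y \<in> S" shows "shifts k Y \<in> shifted_class C S (int k)"
proof -
  have o: "shifts k Y \<in> Ob C" using assms by auto
  have "isomorphic C (shifts 0 (shifts k Y)) (shifts k Y)" using isomorphic_refl[OF o] by simp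
  moreover have "int k = int k - int 0" by simp
  ultimately show ?thesis using o assms(2) unfolding shifted_class_iff by blast
qed

lemma shifted_class_direct_summand: assumes SO: "S \<subseteq> Ob C" and cl: "\<forall>X Y. is_direct_summand C X Y \<longrightarrow> Y \<in> S \<longrightarrow> X \<in> S"
  and z: "is_direct_summand C Z Z1" and z1: "Z1 \<in> shifted_class C S n"
  shows "Z \<in> shifted_class C S n"
proof -
  obtain Y j k where h: "Z1 \<in> Ob C" "Y \<in> S" "n = int k - int j" "isomorphic C (shifts j Z1) (shifts k Y)"
    using z1 shifted_class_iff by blast
  have oZ: "Z \<in> Ob C" using z unfolding is_direct_summand_def by blast
  have "is_direct_summand C (shifts j Z) (shifts k Y)"
    by (rule direct_summand_isomorphic[OF shifts_direct_summand[OF z] h(4)])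
  then obtain W' where W': "is_direct_summand C W' Y" "isomorphic C (shifts j Z) (shifts k W')"
    using direct_summand_of_shifts h(2) SO by blast
  have "W' \<in> S" using cl W'(1) h(2) by blast
  then show ?thesis unfolding shifted_class_iff using oZ h(3) W'(2) by blast
qed

lemma shifted_class_normalize: assumes SO: "S \<subseteq> Ob C" and x: "X \<in> shifted_class C S n" and n: "n = int b - int a"
  shows "\<exists>Y\<in>S. isomorphic C (shifts a X) (shifts b Y)"
proof -
  obtain Y j k where h: "X \<in> Ob C" "Y \<in> S" "n = int k - int j" "isomorphic C (shifts j X) (shifts k Y)"
    using x shifted_class_iff by blast
  have oY: "Y \<in> Ob C" using h(2) SO by blast
  show ?thesis
  proof (cases "b \<le> k")
    case True
    define d where "d = k - b"
    have d: "k = d + b" using True d_def by simp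
    have jd: "j = d + a" using n h(3) d by linarith
    have "isomorphic C (shifts d (shifts a X)) (shifts d (shifts b Y))" using h(4) unfolding d jd by (simp add: funpow_add)
    then have "isomorphic C (shifts a X) (shifts b Y)" by (rule shifts_reflects_isomorphic[rotated 2]) (simp_all add: h(1) oY)
    then show ?thesis using h(2) by blast
  next
    case False
    define d where "d = b - k"
    have d: "b = d + k" using False d_def by simp
    have ad: "a = d + j" using n h(3) d by linarith
    have "isomorphic C (shifts d (shifts j X)) (shifts d (shifts k Y))" using shifts_isomorphic[OF h(4)] .
    then have "isomorphic C (shifts a X) (shifts b Y)" unfolding ad d by (simp add: funpow_add)
    then show ?thesis using h(2) by blast
  qed
qed

lemma zro_transport_iso: assumes a: "iso C A A' al" and b: "iso C B B' be"
  and z: "\<forall>h. arr h \<and> src h = A' \<and> tgt h = B' \<longrightarrow> h = zro C A' B'"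
  and g: "arr g" "src g = A" "tgt g = B"
  shows "g = zro C A B"
proof -
  obtain al' where a': "arr al" "src al = A" "tgt al = A'" "arr al'" "src al' = A'" "tgt al' = A"
    "cmp C al' al = idt C A" "cmp C al al' = idt C A'" using isoE[OF a] by blast
  obtain be' where b': "arr be" "src be = B" "tgt be = B'" "arr be'" "src be' = B'" "tgt be' = B"
    "cmp C be' be = idt C B" "cmp C be be' = idt C B'" using isoE[OF b] by blast
  have o: "A \<in> Ob C" "A' \<in> Ob C" "B \<in> Ob C" "B' \<in> Ob C"
    using arr_objs[OF a'(1)] arr_objs[OF b'(1)] a'(2,3) b'(2,3) by simp_all
  have "cmp C be (cmp C g al') = zro C A' B'" using z a' b' g by simp
  then have "cmp C be' (cmp C be (cmp C g al')) = cmp C be' (zro C A' B')" by simp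
  then have "cmp C g al' = zro C A' B" using a' b' g o by (simp add: cmp_inverse_cancel[OF b'(7)])
  then have "cmp C (cmp C g al') al = cmp C (zro C A' B) al" by simp
  then show ?thesis using a' b' g o by simp
qed

lemma Hom_shifts_zro: assumes o: "P \<in> Ob C" "Q \<in> Ob C" and z: "Hom C P Q = {zro C P Q}"
  shows "\<forall>h. arr h \<and> src h = shifts b P \<and> tgt h = shifts b Q \<longrightarrow> h = zro C (shifts b P) (shifts b Q)"
proof (intro allI impI)
  fix h assume h: "arr h \<and> src h = shifts b P \<and> tgt h = shifts b Q"
  then have "h \<in> Hom C (shifts b P) (shifts b Q)" by (simp add: hom_iff)
  then have "h \<in> shiftsM b ` Hom C P Q" using shiftsM_bij[OF o, of b] unfolding bij_betw_def by simp
  then show "h = zro C (shifts b P) (shifts b Q)" using z o by simp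
qed

end

locale weight_cat = tri_cat C for C :: "('o,'m,'f::comm_ring_1,'x) tcat_scheme" +
  fixes w :: "'o set \<times> 'o set"
  assumes WS: "weight_structure C w"
begin

lemma wle0_ob: "fst w \<subseteq> Ob C" using WS unfolding weight_structure_def by blast
lemma wge0_ob: "snd w \<subseteq> Ob C" using WS unfolding weight_structure_def by blast
lemma wle0_summand_closed: "\<forall>X Y. is_direct_summand C X Y \<longrightarrow> Y \<in> fst w \<longrightarrow> X \<in> fst w"
  using WS unfolding weight_structure_def by blast
lemma wge0_summand_closed: "\<forall>X Y. is_direct_summand C X Y \<longrightarrow> Y \<in> snd w \<longrightarrow> X \<in> snd w"
  using WS unfolding weight_structure_def by blast
lemma Hom_wle0_wge1: "X \<in> fst w \<Longrightarrow> Y \<in> wge C w 1 \<Longrightarrow> Hom C X Y = {zro C X Y}"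
  using WS unfolding weight_structure_def by blast
lemma weight_decomposition: "M \<in> Ob C \<Longrightarrow> \<exists>A B a b c. (A, M, B, a, b, c) \<in> tri C \<and> A \<in> wle C w n \<and> B \<in> wge C w (n + 1)"
  using WS unfolding weight_structure_def by blast

lemma weight_orth: assumes X: "X \<in> wle C w m" and Y: "Y \<in> wge C w (m + 1)"
  and f: "arr f" "src f = X" "tgt f = Y"
  shows "f = zro C X Y"
proof -
  define a where "a = nat (- m)"
  define b where "b = nat m"
  have m: "m = int b - int a" unfolding a_def b_def by simp
  obtain P where P: "P \<in> fst w" "isomorphic C (shifts a X) (shifts b P)"
    using shifted_class_normalize[OF wle0_ob X[unfolded wle_def] m] by blast
  have m1: "m + 1 = int (Suc b) - int a" using m by simp
  obtain Q where Q: "Q \<in> snd w" "isomorphic C (shifts a Y) (shifts (Suc b) Q)"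
    using shifted_class_normalize[OF wge0_ob Y[unfolded wge_def] m1] by blast
  have oP: "P \<in> Ob C" using P wle0_ob by blast
  have oQ: "Q \<in> Ob C" "shO C Q \<in> Ob C" using Q wge0_ob by auto
  have "shifts 1 Q \<in> shifted_class C (snd w) (int 1)" by (rule shifted_class_shifts[OF wge0_ob Q(1)])
  then have "shO C Q \<in> wge C w 1" unfolding wge_def by simp
  then have z0: "Hom C P (shO C Q) = {zro C P (shO C Q)}" using Hom_wle0_wge1 P(1) by blast
  have z: "\<forall>h. arr h \<and> src h = shifts b P \<and> tgt h = shifts b (shO C Q) \<longrightarrow> h = zro C (shifts b P) (shifts b (shO C Q))"
    using Hom_shifts_zro[OF oP oQ(2) z0] .
  obtain al where al: "iso C (shifts a X) (shifts b P) al" using P(2) unfolding isomorphic_def by blast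
  have "isomorphic C (shifts a Y) (shifts b (shO C Q))" using Q(2) by (simp add: shifts_shO_commute)
  then obtain be where be: "iso C (shifts a Y) (shifts b (shO C Q)) be" unfolding isomorphic_def by blast
  have "shiftsM a f = zro C (shifts a X) (shifts a Y)"
    by (rule zro_transport_iso[OF al be z]) (use f in simp_all)
  then have "shiftsM a f = shiftsM a (zro C X Y)" using f arr_objs[OF f(1)] by simp
  then show ?thesis by (rule shiftsM_inj[rotated 4]) (use f arr_objs[OF f(1)] in simp_all)
qed

lemma wle_if_orth: assumes Z: "Z \<in> Ob C"
  and h: "\<And>T f. T \<in> wge C w (n + 1) \<Longrightarrow> arr f \<Longrightarrow> src f = Z \<Longrightarrow> tgt f = T \<Longrightarrow> f = zro C Z T"
  shows "Z \<in> wle C w n"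
proof -
  obtain A B a b c where t: "(A, Z, B, a, b, c) \<in> tri C" and A: "A \<in> wle C w n" and B: "B \<in> wge C w (n + 1)"
    using weight_decomposition[OF Z] by blast
  note d = distinguishedD[OF t]
  \<comment> \<open>b vanishes, so Z is a retract of A\<close>
  have b0: "b = zro C Z B" using h[OF B] d by simp
  have "cmp C b (idt C Z) = zro C (src (idt C Z)) B" using b0 d by simp
  then obtain v where v: "arr v" "src v = Z" "tgt v = A" "cmp C a v = idt C Z"
    using tri_factor_through_base[OF t, of "idt C Z"] d by auto
  have "is_direct_summand C Z A" by (rule retract_direct_summand[OF v(1-3) d(4-6) v(4)])
  then show ?thesis using shifted_class_direct_summand[OF wle0_ob wle0_summand_closed] A unfolding wle_def by blast
qed

lemma wge_if_orth: assumes Z: "Z \<in> Ob C"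
  and h: "\<And>T f. T \<in> wle C w (n - 1) \<Longrightarrow> arr f \<Longrightarrow> src f = T \<Longrightarrow> tgt f = Z \<Longrightarrow> f = zro C T Z"
  shows "Z \<in> wge C w n"
proof -
  obtain A B a b c where t: "(A, Z, B, a, b, c) \<in> tri C" and A: "A \<in> wle C w (n - 1)" and B: "B \<in> wge C w (n - 1 + 1)"
    using weight_decomposition[OF Z] by blast
  note d = distinguishedD[OF t]
  \<comment> \<open>a vanishes, so Z is a retract of B\<close>
  have a0: "a = zro C A Z" using h[OF A] d by simp
  have "cmp C (idt C Z) a = zro C A (tgt (idt C Z))" using a0 d by simp
  then obtain v where v: "arr v" "src v = B" "tgt v = Z" "cmp C v b = idt C Z"
    using tri_factor_through_cone[OF t, of "idt C Z"] d by auto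
  have "is_direct_summand C Z B" by (rule retract_direct_summand[OF d(7-9) v(1-3) v(4)])
  then show ?thesis using shifted_class_direct_summand[OF wge0_ob wge0_summand_closed] B unfolding wge_def by simp
qed

lemma wle_shift: "X \<in> wle C w m \<Longrightarrow> shO C X \<in> wle C w (m + 1)"
  unfolding wle_def by (rule shifted_class_shift)

lemma tri_cone_wle: assumes t: "(X1, A1, X2, x1, x2, x3) \<in> tri C" and X1: "X1 \<in> wle C w (n - 1)"
  and A1: "A1 \<in> wle C w n"
  shows "X2 \<in> wle C w n"
proof -
  note d = distinguishedD[OF t]
  have t': "(A1, X2, shO C X1, x2, x3, smul C (-1) (shM C x1)) \<in> tri C" using rotate[OF t] .
  have sX1: "shO C X1 \<in> wle C w n" using wle_shift[OF X1] by simp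
  show ?thesis
  proof (rule wle_if_orth[OF d(3)])
    fix T f assume T: "T \<in> wge C w (n + 1)" and f: "arr f" "src f = X2" "tgt f = T"
    have "cmp C f x2 = zro C A1 T" by (rule weight_orth[OF A1 T]) (use f d in simp_all)
    then have "cmp C f x2 = zro C A1 (tgt f)" using f by simp
    then obtain v where v: "arr v" "src v = shO C X1" "tgt v = tgt f" "cmp C v x3 = f"
      using tri_factor_through_cone[OF t' f(1)] f by auto
    have "v = zro C (shO C X1) T" by (rule weight_orth[OF sX1 T]) (use v f in simp_all)
    moreover have "T \<in> Ob C" using arr_objs(2)[OF f(1)] f(3) by simp
    ultimately show "f = zro C X2 T" using v f d by (simp flip: v(4))
  qed
qed

lemma tri_fibre_wge: assumes t: "(Y1, B, Y2, y1, y2, y3) \<in> tri C" and Y2: "Y2 \<in> wge C w (n + 1)"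
  and B: "B \<in> wge C w n"
  shows "Y1 \<in> wge C w n"
proof -
  note d = distinguishedD[OF t]
  have t'': "(Y2, shO C Y1, shO C B, y3, smul C (-1) (shM C y1), smul C (-1) (shM C y2)) \<in> tri C"
    using rotate[OF rotate[OF t]] .
  show ?thesis
  proof (rule wge_if_orth[OF d(1)])
    fix T f assume T: "T \<in> wle C w (n - 1)" and f: "arr f" "src f = T" "tgt f = Y1"
    have oT: "T \<in> Ob C" using T shifted_class_ob unfolding wle_def by blast
    have B': "B \<in> wge C w (n - 1 + 1)" using B by simp
    have z: "cmp C y1 f = zro C T B" by (rule weight_orth[OF T B']) (use f d in simp_all)
    have "cmp C (smul C (-1) (shM C y1)) (shM C f) = smul C (-1) (shM C (cmp C y1 f))"
      using f d by simp
    also have "\<dots> = zro C (src (shM C f)) (shO C B)" using z f d oT by simp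
    finally have e: "cmp C (smul C (-1) (shM C y1)) (shM C f) = zro C (src (shM C f)) (shO C B)" .
    obtain v where v: "arr v" "src v = shO C T" "tgt v = Y2" "cmp C y3 v = shM C f"
      using tri_factor_through_base[OF t'', of "shM C f"] e f by auto
    have sT: "shO C T \<in> wle C w n" using wle_shift[OF T] by simp
    have "v = zro C (shO C T) Y2" by (rule weight_orth[OF sT Y2]) (use v in simp_all)
    then have "shM C f = shM C (zro C T Y1)" using v d f oT by (simp flip: v(4))
    then show "f = zro C T Y1" by (rule shift_inj[rotated 4]) (use f d oT in simp_all)
  qed
qed

end

locale exact_tri_functor = C1: tri_cat C1 + C2: tri_cat C2
  for C1 :: "('o1,'m1,'f::comm_ring_1,'x) tcat_scheme" and C2 :: "('o2,'m2,'f,'y) tcat_scheme" +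
  fixes rO :: "'o1 \<Rightarrow> 'o2" and rM :: "'m1 \<Rightarrow> 'm2" and phi :: "'o1 \<Rightarrow> 'm2"
  assumes E: "exact_functor C1 C2 rO rM phi"

sublocale exact_tri_functor \<subseteq> R: lin_functor C1 C2 rO rM
  using E unfolding exact_functor_def by unfold_locales blast

context exact_tri_functor begin

lemma phi_iso: "X \<in> Ob C1 \<Longrightarrow> iso C2 (rO (shO C1 X)) (shO C2 (rO X)) (phi X)"
  using E unfolding exact_functor_def by blast
lemma phi_natural: "C1.arr f \<Longrightarrow> cmp C2 (phi (C1.tgt f)) (rM (shM C1 f)) = cmp C2 (shM C2 (rM f)) (phi (C1.src f))"
  using E C1.arr_Hom unfolding exact_functor_def by blast
lemma map_distinguished: "(X,Y,Z,f,g,h) \<in> tri C1 \<Longrightarrow> (rO X, rO Y, rO Z, rM f, rM g, cmp C2 (phi X) (rM h)) \<in> tri C2"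
  using E unfolding exact_functor_def by blast

lemma map_shifts_isomorphic: "X \<in> Ob C1 \<Longrightarrow> isomorphic C2 (rO (C1.shifts k X)) (C2.shifts k (rO X))"
proof (induction k)
  case 0 then show ?case using C2.isomorphic_refl by simp
next
  case (Suc k)
  have "isomorphic C2 (rO (shO C1 (C1.shifts k X))) (shO C2 (rO (C1.shifts k X)))"
    using phi_iso[of "C1.shifts k X"] Suc.prems unfolding isomorphic_def by auto
  moreover have "isomorphic C2 (shO C2 (rO (C1.shifts k X))) (shO C2 (C2.shifts k (rO X)))"
    using C2.shift.map_isomorphic[OF Suc.IH[OF Suc.prems]] .
  ultimately show ?case using C2.isomorphic_trans by simp
qed

lemma map_shifted_class: assumes SO: "S \<subseteq> Ob C1" and SS: "\<forall>Y\<in>S. rO Y \<in> S'" and x: "X \<in> shifted_class C1 S n"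
  shows "rO X \<in> shifted_class C2 S' n"
proof -
  obtain Y j k where h: "X \<in> Ob C1" "Y \<in> S" "n = int k - int j" "isomorphic C1 (C1.shifts j X) (C1.shifts k Y)"
    using x C1.shifted_class_iff by blast
  have oY: "Y \<in> Ob C1" using SO h(2) by blast
  have i1: "isomorphic C2 (C2.shifts j (rO X)) (rO (C1.shifts j X))" using C2.isomorphic_sym map_shifts_isomorphic h(1) by blast
  have i2: "isomorphic C2 (rO (C1.shifts j X)) (rO (C1.shifts k Y))" using R.map_isomorphic[OF h(4)] .
  have i3: "isomorphic C2 (rO (C1.shifts k Y)) (C2.shifts k (rO Y))" using map_shifts_isomorphic oY by blast
  have "isomorphic C2 (C2.shifts j (rO X)) (C2.shifts k (rO Y))" using i1 i2 i3 C2.isomorphic_trans by blast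
  moreover have "rO X \<in> Ob C2" using h(1) by simp
  moreover have "rO Y \<in> S'" using SS h(2) by blast
  ultimately show ?thesis unfolding C2.shifted_class_iff using h(3) by blast
qed

definition full_at :: "'o1 \<Rightarrow> 'o1 \<Rightarrow> bool" where
  "full_at X Y \<longleftrightarrow> Hom C2 (rO X) (rO Y) \<subseteq> rM ` Hom C1 X Y"

lemma full_atI:
  assumes "\<And>v. C2.arr v \<Longrightarrow> C2.src v = rO X \<Longrightarrow> C2.tgt v = rO Y \<Longrightarrow>
      \<exists>u. C1.arr u \<and> C1.src u = X \<and> C1.tgt u = Y \<and> rM u = v"
  shows "full_at X Y"
  unfolding full_at_def
proof
  fix v assume "v \<in> Hom C2 (rO X) (rO Y)"
  then obtain u where "C1.arr u" "C1.src u = X" "C1.tgt u = Y" "rM u = v"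
    using assms C2.hom_iff by blast
  then show "v \<in> rM ` Hom C1 X Y" using C1.hom_iff by blast
qed

lemma full_atD:
  assumes "full_at X Y" "C2.arr v" "C2.src v = rO X" "C2.tgt v = rO Y"
  obtains u where "C1.arr u" "C1.src u = X" "C1.tgt u = Y" "rM u = v"
proof -
  have "v \<in> Hom C2 (rO X) (rO Y)" using assms(2-4) C2.hom_iff by blast
  then have "v \<in> rM ` Hom C1 X Y" using assms(1) unfolding full_at_def by blast
  then show ?thesis using that C1.hom_iff by blast
qed

lemma full_at_isomorphic: assumes ix: "isomorphic C1 X X'" and iy: "isomorphic C1 Y Y'" and l: "full_at X' Y'"
  shows "full_at X Y"
proof (rule full_atI)
  fix v assume v: "C2.arr v" "C2.src v = rO X" "C2.tgt v = rO Y"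
  obtain al where "iso C1 X X' al" using ix unfolding isomorphic_def by blast
  then obtain al' where a: "C1.arr al" "C1.src al = X" "C1.tgt al = X'" "C1.arr al'" "C1.src al' = X'" "C1.tgt al' = X"
    "cmp C1 al' al = idt C1 X" "cmp C1 al al' = idt C1 X'" using C1.isoE by blast
  obtain be where "iso C1 Y Y' be" using iy unfolding isomorphic_def by blast
  then obtain be' where b: "C1.arr be" "C1.src be = Y" "C1.tgt be = Y'" "C1.arr be'" "C1.src be' = Y'" "C1.tgt be' = Y"
    "cmp C1 be' be = idt C1 Y" "cmp C1 be be' = idt C1 Y'" using C1.isoE by blast
  have o: "X \<in> Ob C1" "Y \<in> Ob C1" "X' \<in> Ob C1" "Y' \<in> Ob C1"
    using C1.arr_objs[OF a(1)] C1.arr_objs[OF b(1)] a(2,3) b(2,3) by simp_all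
  let ?v' = "cmp C2 (rM be) (cmp C2 v (rM al'))"
  have "C2.arr ?v'" "C2.src ?v' = rO X'" "C2.tgt ?v' = rO Y'" using v a b by simp_all
  then obtain u' where u': "C1.arr u'" "C1.src u' = X'" "C1.tgt u' = Y'" "rM u' = ?v'"
    using full_atD[OF l] by blast
  let ?u = "cmp C1 be' (cmp C1 u' al)"
  have e1: "cmp C2 (rM be') (rM be) = idt C2 (rO Y)" using R.map_cmp_eq[OF b(1) b(4) _ b(7)] b o by simp
  have e2: "cmp C2 (rM al') (rM al) = idt C2 (rO X)" using R.map_cmp_eq[OF a(1) a(4) _ a(7)] a o by simp
  have "rM ?u = cmp C2 (rM be') (cmp C2 ?v' (rM al))" using u' a b by simp
  also have "\<dots> = cmp C2 (cmp C2 (rM be') (rM be)) (cmp C2 v (cmp C2 (rM al') (rM al)))"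
    using a b v by simp
  also have "\<dots> = v" using e1 e2 v by simp
  finally have "rM ?u = v" .
  moreover have "C1.arr ?u" "C1.src ?u = X" "C1.tgt ?u = Y" using u' a b by simp_all
  ultimately show "\<exists>u. C1.arr u \<and> C1.src u = X \<and> C1.tgt u = Y \<and> rM u = v" by blast
qed

lemma full_at_shift: assumes o: "X \<in> Ob C1" "Y \<in> Ob C1" and l: "full_at X Y"
  shows "full_at (shO C1 X) (shO C1 Y)"
proof (rule full_atI)
  fix v assume v: "C2.arr v" "C2.src v = rO (shO C1 X)" "C2.tgt v = rO (shO C1 Y)"
  obtain px' where px: "C2.arr (phi X)" "C2.src (phi X) = rO (shO C1 X)" "C2.tgt (phi X) = shO C2 (rO X)"
    "C2.arr px'" "C2.src px' = shO C2 (rO X)" "C2.tgt px' = rO (shO C1 X)"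
    "cmp C2 px' (phi X) = idt C2 (rO (shO C1 X))" "cmp C2 (phi X) px' = idt C2 (shO C2 (rO X))"
    using C2.isoE[OF phi_iso[OF o(1)]] by blast
  have py: "C2.arr (phi Y)" "C2.src (phi Y) = rO (shO C1 Y)" "C2.tgt (phi Y) = shO C2 (rO Y)"
    using C2.isoE[OF phi_iso[OF o(2)]] by blast+
  let ?w' = "cmp C2 (phi Y) (cmp C2 v px')"
  have w': "C2.arr ?w'" "C2.src ?w' = shO C2 (rO X)" "C2.tgt ?w' = shO C2 (rO Y)" using v px py by simp_all
  obtain w where w: "C2.arr w" "C2.src w = rO X" "C2.tgt w = rO Y" "shM C2 w = ?w'"
    using C2.shift_full[OF _ _ w'] o by auto
  obtain u where u: "C1.arr u" "C1.src u = X" "C1.tgt u = Y" "rM u = w" using full_atD[OF l w(1-3)] by blast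
  have "cmp C2 (phi Y) (rM (shM C1 u)) = cmp C2 (shM C2 (rM u)) (phi X)" using phi_natural[OF u(1)] u by simp
  also have "\<dots> = cmp C2 ?w' (phi X)" using u w by simp
  also have "\<dots> = cmp C2 (phi Y) v" using v px py by (simp add: C2.cmp_inverse_cancel[OF px(7)])
  finally have "cmp C2 (phi Y) (rM (shM C1 u)) = cmp C2 (phi Y) v" .
  then have "rM (shM C1 u) = v" by (rule C2.iso_cancel_left[OF phi_iso[OF o(2)], rotated 5]) (use u v in simp_all)
  moreover have "C1.arr (shM C1 u)" "C1.src (shM C1 u) = shO C1 X" "C1.tgt (shM C1 u) = shO C1 Y" using u by simp_all
  ultimately show "\<exists>u. C1.arr u \<and> C1.src u = shO C1 X \<and> C1.tgt u = shO C1 Y \<and> rM u = v" by blast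
qed

lemma full_at_unshift: assumes o: "X \<in> Ob C1" "Y \<in> Ob C1" and l: "full_at (shO C1 X) (shO C1 Y)"
  shows "full_at X Y"
proof (rule full_atI)
  fix v assume v: "C2.arr v" "C2.src v = rO X" "C2.tgt v = rO Y"
  have px: "C2.arr (phi X)" "C2.src (phi X) = rO (shO C1 X)" "C2.tgt (phi X) = shO C2 (rO X)"
    using C2.isoE[OF phi_iso[OF o(1)]] by blast+
  obtain py' where py: "C2.arr (phi Y)" "C2.src (phi Y) = rO (shO C1 Y)" "C2.tgt (phi Y) = shO C2 (rO Y)"
    "C2.arr py'" "C2.src py' = shO C2 (rO Y)" "C2.tgt py' = rO (shO C1 Y)"
    "cmp C2 py' (phi Y) = idt C2 (rO (shO C1 Y))" "cmp C2 (phi Y) py' = idt C2 (shO C2 (rO Y))"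
    using C2.isoE[OF phi_iso[OF o(2)]] by blast
  let ?v' = "cmp C2 py' (cmp C2 (shM C2 v) (phi X))"
  have "C2.arr ?v'" "C2.src ?v' = rO (shO C1 X)" "C2.tgt ?v' = rO (shO C1 Y)" using v px py by simp_all
  then obtain u' where u': "C1.arr u'" "C1.src u' = shO C1 X" "C1.tgt u' = shO C1 Y" "rM u' = ?v'"
    using full_atD[OF l] by blast
  obtain u where u: "C1.arr u" "C1.src u = X" "C1.tgt u = Y" "shM C1 u = u'"
    using C1.shift_full[OF o u'(1-3)] by blast
  have "cmp C2 (shM C2 (rM u)) (phi X) = cmp C2 (phi Y) (rM (shM C1 u))" using phi_natural[OF u(1)] u by simp
  also have "\<dots> = cmp C2 (phi Y) ?v'" using u u' by simp
  also have "\<dots> = cmp C2 (shM C2 v) (phi X)" using v px py by (simp add: C2.cmp_inverse_cancel[OF py(8)])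
  finally have "cmp C2 (shM C2 (rM u)) (phi X) = cmp C2 (shM C2 v) (phi X)" .
  then have "shM C2 (rM u) = shM C2 v" by (rule C2.iso_cancel_right[OF phi_iso[OF o(1)], rotated 5]) (use u v in simp_all)
  then have "rM u = v" by (rule C2.shift_inj[rotated 4]) (use u v in simp_all)
  then show "\<exists>u. C1.arr u \<and> C1.src u = X \<and> C1.tgt u = Y \<and> rM u = v" using u by blast
qed

lemma full_at_shifts: "X \<in> Ob C1 \<Longrightarrow> Y \<in> Ob C1 \<Longrightarrow> full_at X Y \<Longrightarrow> full_at (C1.shifts k X) (C1.shifts k Y)"
  by (induction k) (simp_all add: full_at_shift)

lemma full_at_unshifts: "X \<in> Ob C1 \<Longrightarrow> Y \<in> Ob C1 \<Longrightarrow> full_at (C1.shifts k X) (C1.shifts k Y) \<Longrightarrow> full_at X Y"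
proof (induction k)
  case 0 then show ?case by simp
next
  case (Suc k)
  have "full_at (C1.shifts k X) (C1.shifts k Y)" by (rule full_at_unshift) (use Suc.prems in simp_all)
  then show ?case using Suc by blast
qed

end

locale weight_exact_functor = exact_tri_functor C1 C2 rO rM phi + W1: weight_cat C1 w1 + W2: weight_cat C2 w2
  for C1 :: "('o1,'m1,'f::comm_ring_1,'x) tcat_scheme" and C2 :: "('o2,'m2,'f,'y) tcat_scheme"
  and rO rM phi w1 w2 +
  assumes WE: "weight_exact C1 w1 C2 w2 rO"
    and FH: "full_on_hearts C1 w1 C2 rO rM"
begin

lemma map_wle: "X \<in> wle C1 w1 m \<Longrightarrow> rO X \<in> wle C2 w2 m"
  unfolding wle_def by (rule map_shifted_class[OF W1.wle0_ob]) (use WE in \<open>simp_all add: weight_exact_def\<close>)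
lemma map_wge: "X \<in> wge C1 w1 m \<Longrightarrow> rO X \<in> wge C2 w2 m"
  unfolding wge_def by (rule map_shifted_class[OF W1.wge0_ob]) (use WE in \<open>simp_all add: weight_exact_def\<close>)

lemma pure_weight_shifted_heart: assumes "X \<in> wle C1 w1 n" "X \<in> wge C1 w1 n"
  shows "\<exists>P\<in>heart w1. isomorphic C1 (C1.shifts (nat (- n)) X) (C1.shifts (nat n) P)"
proof -
  have m: "n = int (nat n) - int (nat (- n))" by simp
  obtain P where P: "P \<in> fst w1" "isomorphic C1 (C1.shifts (nat (- n)) X) (C1.shifts (nat n) P)"
    using C1.shifted_class_normalize[OF W1.wle0_ob assms(1)[unfolded wle_def] m] by blast
  obtain Q where Q: "Q \<in> snd w1" "isomorphic C1 (C1.shifts (nat (- n)) X) (C1.shifts (nat n) Q)"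
    using C1.shifted_class_normalize[OF W1.wge0_ob assms(2)[unfolded wge_def] m] by blast
  have o: "P \<in> Ob C1" "Q \<in> Ob C1" using P Q W1.wle0_ob W1.wge0_ob by auto
  have "isomorphic C1 (C1.shifts (nat n) P) (C1.shifts (nat n) Q)"
    using C1.isomorphic_trans[OF C1.isomorphic_sym[OF P(2)] Q(2)] .
  then have "isomorphic C1 P Q" by (rule C1.shifts_reflects_isomorphic[rotated 2]) (use o in simp_all)
  then have "P \<in> snd w1" using C1.closed_under_isomorphic[OF W1.wge0_summand_closed] Q(1) by blast
  then show ?thesis using P unfolding heart_def by blast
qed

lemma full_at_heart: "P \<in> heart w1 \<Longrightarrow> P' \<in> heart w1 \<Longrightarrow> full_at P P'"
  using FH unfolding full_on_hearts_def full_at_def by blast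

lemma full_at_pure_weight: assumes "X \<in> wle C1 w1 n" "X \<in> wge C1 w1 n" "Y \<in> wle C1 w1 n" "Y \<in> wge C1 w1 n"
  shows "full_at X Y"
proof -
  obtain P where P: "P \<in> heart w1" "isomorphic C1 (C1.shifts (nat (- n)) X) (C1.shifts (nat n) P)"
    using pure_weight_shifted_heart[OF assms(1,2)] by blast
  obtain P' where P': "P' \<in> heart w1" "isomorphic C1 (C1.shifts (nat (- n)) Y) (C1.shifts (nat n) P')"
    using pure_weight_shifted_heart[OF assms(3,4)] by blast
  have o: "P \<in> Ob C1" "P' \<in> Ob C1" using P(1) P'(1) W1.wle0_ob unfolding heart_def by auto
  have oX: "X \<in> Ob C1" "Y \<in> Ob C1" using assms(1,3) C1.shifted_class_ob unfolding wle_def by blast+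
  have "full_at (C1.shifts (nat n) P) (C1.shifts (nat n) P')" by (rule full_at_shifts[OF o full_at_heart[OF P(1) P'(1)]])
  then have "full_at (C1.shifts (nat (- n)) X) (C1.shifts (nat (- n)) Y)" using full_at_isomorphic P(2) P'(2) by blast
  then show ?thesis using full_at_unshifts oX by blast
qed

lemma full_at_wle_wge:
  assumes P: "P \<in> wle C1 w1 n" and Q: "Q \<in> wge C1 w1 n"
  shows "full_at P Q"
proof (rule full_atI)
  fix g assume g: "C2.arr g" "C2.src g = rO P" "C2.tgt g = rO Q"
  have oP: "P \<in> Ob C1" and oQ: "Q \<in> Ob C1" using P Q C1.shifted_class_ob unfolding wle_def wge_def by blast+
  obtain X1 X2 x1 x2 x3 where tX: "(X1, P, X2, x1, x2, x3) \<in> tri C1" and X1: "X1 \<in> wle C1 w1 (n - 1)"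
    and X2: "X2 \<in> wge C1 w1 (n - 1 + 1)" using W1.weight_decomposition[OF oP] by blast
  obtain Y1 Y2 y1 y2 y3 where tY: "(Y1, Q, Y2, y1, y2, y3) \<in> tri C1" and Y1: "Y1 \<in> wle C1 w1 n"
    and Y2: "Y2 \<in> wge C1 w1 (n + 1)" using W1.weight_decomposition[OF oQ] by blast
  note dX = C1.distinguishedD[OF tX] and dY = C1.distinguishedD[OF tY]
  note rtX = map_distinguished[OF tX] and rtY = map_distinguished[OF tY]
  \<comment> \<open>g factors through X2 since it kills X1, and then through Y1 since Y2 receives no
    nonzero maps from X2; both X2 and Y1 are of pure weight n\<close>
  have pure: "full_at X2 Y1"
    by (rule full_at_pure_weight) (use W1.tri_cone_wle[OF tX X1 P] X2 Y1 W1.tri_fibre_wge[OF tY Y2 Q] in simp_all)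
  have "cmp C2 g (rM x1) = zro C2 (rO X1) (rO Q)"
    by (rule W2.weight_orth[OF map_wle[OF X1]]) (use map_wge[OF Q] g dX in simp_all)
  then obtain u where u: "C2.arr u" "C2.src u = rO X2" "C2.tgt u = rO Q" "cmp C2 u (rM x2) = g"
    using C2.tri_factor_through_cone[OF rtX g(1)] g by auto
  have "cmp C2 (rM y2) u = zro C2 (rO X2) (rO Y2)"
    by (rule W2.weight_orth[OF map_wle[OF W1.tri_cone_wle[OF tX X1 P]] map_wge[OF Y2]]) (use u dY in simp_all)
  then obtain v where v: "C2.arr v" "C2.src v = rO X2" "C2.tgt v = rO Y1" "cmp C2 (rM y1) v = u"
    using C2.tri_factor_through_base[OF rtY u(1)] u dY by auto
  obtain k where k: "C1.arr k" "C1.src k = X2" "C1.tgt k = Y1" "rM k = v"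
    using full_atD[OF pure v(1-3)] by blast
  let ?h = "cmp C1 y1 (cmp C1 k x2)"
  have "rM ?h = cmp C2 (rM y1) (cmp C2 v (rM x2))" using k dX dY by simp
  also have "\<dots> = cmp C2 (cmp C2 (rM y1) v) (rM x2)" using v(1-3) dX dY by simp
  also have "\<dots> = g" using u(4) v(4) by simp
  finally show "\<exists>h. C1.arr h \<and> C1.src h = P \<and> C1.tgt h = Q \<and> rM h = g"
    using k dX dY by (intro exI[of _ ?h]) simp
qed

end

theorem mainTheorem2:
  fixes C1 :: "('o1,'m1,'f::comm_ring_1) tcat"
    and C2 :: "('o2,'m2,'f) tcat"
    and w1 :: "'o1 set \<times> 'o1 set" and w2 :: "'o2 set \<times> 'o2 set"
    and rO :: "'o1 \<Rightarrow> 'o2" and rM :: "'m1 \<Rightarrow> 'm2" and phi :: "'o1 \<Rightarrow> 'm2"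
  assumes "fin_prod_char0_fields TYPE('f)"
    and "triangulated C1" and "triangulated C2"
    and "weight_structure C1 w1" and "weight_structure C2 w2"
    and "exact_functor C1 C2 rO rM phi"
    and "weight_exact C1 w1 C2 w2 rO"
    and "full_on_hearts C1 w1 C2 rO rM"
    and "minimal_weight_filtration C1 w1 n A M B a b delta"
  shows "minimal_weight_filtration C2 w2 n (rO A) (rO M) (rO B) (rM a) (rM b)
           (cmp C2 (phi A) (rM delta))"
proof -
  interpret weight_exact_functor C1 C2 rO rM phi w1 w2
    using assms by unfold_locales auto
  have t: "(A, M, B, a, b, delta) \<in> tri C1" and A: "A \<in> wle C1 w1 (n - 1)" and B: "B \<in> wge C1 w1 n"
    and rd: "rad C1 B (shO C1 A) delta"
    using assms(9) unfolding minimal_weight_filtration_def by blast+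
  have oA: "A \<in> Ob C1" using C1.distinguishedD[OF t] by simp
  have "shO C1 A \<in> wle C1 w1 n" using W1.wle_shift[OF A] by simp
  then have "full_at (shO C1 A) B" using B by (rule full_at_wle_wge)
  then have "rad C2 (rO B) (rO (shO C1 A)) (rM delta)" using R.map_rad[OF rd] unfolding full_at_def by blast
  moreover have "phi A \<in> Hom C2 (rO (shO C1 A)) (shO C2 (rO A))" using phi_iso[OF oA] unfolding iso_def by blast
  ultimately have "rad C2 (rO B) (shO C2 (rO A)) (cmp C2 (phi A) (rM delta))" by (rule C2.rad_cmp_left)
  then show ?thesis
    using map_distinguished[OF t] map_wle[OF A] map_wge[OF B] unfolding minimal_weight_filtration_def by blast
qed

end
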